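(* Let $\hat W$ be a first degree iMPO in regular form with bond dimension $\chi$. Then there exist an integer $\chi'\ge 0$, an iMPO $\hat W_L$ in regular form of bond dimension $\chi'$, and a complex $(\chi'+2)\times(\chi+2)$ matrix $L$ of the block form $L=\begin{pmatrix}1&\mathbf t&r\\0&\mathsf L&\mathbf s\\0&0&1\end{pmatrix}$ such that $\hat W_LL=L\hat W$ and $\hat W_L$ is in left canonical form.
   Context: Fix the algebra $\mathcal A$ of operators on $\mathbb C^q$ with inner product $\langle\hat A,\hat B\rangle=\mathrm{Tr}[\hat A^\dagger\hat B]/\mathrm{Tr}[\hat 1]$ and an orthonormal basis $\{\hat O_\alpha\}$ with $\hat O_0=\hat 1$. For a matrix $\hat W$ with entries in $\mathcal A$ write $\hat W=\sum_\alpha\hat O_\alpha W_\alpha$ with $(W_\alpha)_{ab}=\langle\hat O_\alpha,\hat W_{ab}\rangle$, and define the transfer matrix $T_W=\sum_\alpha\overline{W_\alpha}\otimes W_\alpha$. An iMPO in regular form of bond dimension $\chi$ is a $(\chi+2)\times(\chi+2)$ matrix with entries in $\mathcal A$ (indices $0,\dots,\chi+1$) of block form $\hat W=\begin{pmatrix}\hat 1&\hat{\mathbf c}&\hat d\\0&\hat{\mathsf A}&\hat{\mathbf b}\\0&0&\hat 1\end{pmatrix}$ (block sizes $1,\chi,1$); it is first degree if every eigenvalue of $T_A$ (transfer matrix of $\hat{\mathsf A}$) has modulus $<1$. An iMPO $\hat W'$ of bond dimension $\chi'$ is in left canonical form if its upper-left $(1+\chi')\times(1+\chi')$ block has orthonormal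 columns: $\sum_{a=0}^{\chi'}\langle\hat W'_{ab},\hat W'_{ac}\rangle=\delta_{bc}$ for all $0\le b,c\le\chi'$. Products such as $L\hat W$ are ordinary matrix products with complex $L$. *)

theory Defs
  imports Complex_Main
begin

type_synonym 'q op = "'q \<Rightarrow> 'q \<Rightarrow> complex"

definition op_id :: "'q op" where
  "op_id = (\<lambda>i j. if i = j then 1 else 0)"

definition op_zero :: "'q op" where
  "op_zero = (\<lambda>i j. 0)"

definition op_scale :: "complex \<Rightarrow> 'q op \<Rightarrow> 'q op" where
  "op_scale c A = (\<lambda>i j. c * A i j)"

definition op_trace_adj :: "'q::finite op \<Rightarrow> 'q op \<Rightarrow> complex" where
  "op_trace_adj A B = (\<Sum>i\<in>UNIV. \<Sum>j\<in>UNIV. cnj (A j i) * B j i)"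

definition op_trace :: "'q::finite op \<Rightarrow> complex" where
  "op_trace A = (\<Sum>i\<in>UNIV. A i i)"

definition op_inner :: "'q::finite op \<Rightarrow> 'q op \<Rightarrow> complex" where
  "op_inner A B = op_trace_adj A B / op_trace (op_id :: 'q op)"

definition op_onb :: "(nat \<Rightarrow> 'q::finite op) \<Rightarrow> bool" where
  "op_onb Ob \<longleftrightarrow>
     (\<forall>\<alpha> < (card (UNIV :: 'q set)^2). \<forall>\<beta> < (card (UNIV :: 'q set)^2).
        op_inner (Ob \<alpha>) (Ob \<beta>) = (if \<alpha> = \<beta> then 1 else 0)) \<and>
     (\<forall>X :: 'q op. \<forall>i j. X i j = (\<Sum>\<alpha> < (card (UNIV :: 'q set)^2). op_inner (Ob \<alpha>) X * Ob \<alpha> i j)) \<and>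
     Ob 0 = op_id"

definition comp :: "(nat \<Rightarrow> 'q::finite op) \<Rightarrow> (nat \<Rightarrow> nat \<Rightarrow> 'q op) \<Rightarrow> nat \<Rightarrow> nat \<Rightarrow> nat \<Rightarrow> complex" where
  "comp Ob W \<alpha> a b = op_inner (Ob \<alpha>) (W a b)"

text \<open>Transfer matrix T_W = sum_alpha conj(W_alpha) (x) W_alpha, as a matrix indexed by pairs:
  (X (x) Y)_{(a,b),(c,d)} = X_{ac} Y_{bd}.\<close>
definition transfer :: "(nat \<Rightarrow> 'q::finite op) \<Rightarrow> (nat \<Rightarrow> nat \<Rightarrow> 'q op) \<Rightarrow> nat \<times> nat \<Rightarrow> nat \<times> nat \<Rightarrow> complex" where
  "transfer Ob W = (\<lambda>(a,b) (c,d). \<Sum>\<alpha> < (card (UNIV :: 'q set)^2). cnj (comp Ob W \<alpha> a c) * comp Ob W \<alpha> b d)"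

definition is_eigenvalue :: "'i set \<Rightarrow> ('i \<Rightarrow> 'i \<Rightarrow> complex) \<Rightarrow> complex \<Rightarrow> bool" where
  "is_eigenvalue I M mu \<longleftrightarrow>
     (\<exists>v :: 'i \<Rightarrow> complex. (\<exists>i\<in>I. v i \<noteq> 0) \<and> (\<forall>i\<in>I. (\<Sum>j\<in>I. M i j * v j) = mu * v i))"

text \<open>iMPO in regular form of bond dimension chi: a (chi+2)x(chi+2) operator-valued matrix
  (indices 0..chi+1) with blocks [[1,c,d],[0,A,b],[0,0,1]].\<close>
definition regular_form :: "nat \<Rightarrow> (nat \<Rightarrow> nat \<Rightarrow> 'q op) \<Rightarrow> bool" where
  "regular_form \<chi> W \<longleftrightarrow>
     W 0 0 = op_id \<and> W (\<chi>+1) (\<chi>+1) = op_id \<and>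
     (\<forall>a. 1 \<le> a \<and> a \<le> \<chi>+1 \<longrightarrow> W a 0 = op_zero) \<and>
     (\<forall>b. b \<le> \<chi> \<longrightarrow> W (\<chi>+1) b = op_zero)"

definition A_block :: "(nat \<Rightarrow> nat \<Rightarrow> 'q op) \<Rightarrow> nat \<Rightarrow> nat \<Rightarrow> 'q op" where
  "A_block W = (\<lambda>a b. W (a+1) (b+1))"

definition first_degree :: "(nat \<Rightarrow> 'q::finite op) \<Rightarrow> nat \<Rightarrow> (nat \<Rightarrow> nat \<Rightarrow> 'q op) \<Rightarrow> bool" where
  "first_degree Ob \<chi> W \<longleftrightarrow>
     regular_form \<chi> W \<and>
     (\<forall>mu. is_eigenvalue ({..<\<chi>} \<times> {..<\<chi>}) (transfer Ob (A_block W)) mu \<longrightarrow> cmod mu < 1)"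

definition left_canonical :: "nat \<Rightarrow> (nat \<Rightarrow> nat \<Rightarrow> 'q::finite op) \<Rightarrow> bool" where
  "left_canonical \<chi>' W \<longleftrightarrow>
     (\<forall>b \<le> \<chi>'. \<forall>c \<le> \<chi>'. (\<Sum>a\<le>\<chi>'. op_inner (W a b) (W a c)) = (if b = c then 1 else 0))"

definition L_block_form :: "nat \<Rightarrow> nat \<Rightarrow> (nat \<Rightarrow> nat \<Rightarrow> complex) \<Rightarrow> bool" where
  "L_block_form \<chi>' \<chi> L \<longleftrightarrow>
     L 0 0 = 1 \<and> L (\<chi>'+1) (\<chi>+1) = 1 \<and>
     (\<forall>a. 1 \<le> a \<and> a \<le> \<chi>'+1 \<longrightarrow> L a 0 = 0) \<and>
     (\<forall>b. b \<le> \<chi> \<longrightarrow> L (\<chi>'+1) b = 0)"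

definition opmat_times_mat :: "nat \<Rightarrow> (nat \<Rightarrow> nat \<Rightarrow> 'q op) \<Rightarrow> (nat \<Rightarrow> nat \<Rightarrow> complex) \<Rightarrow> nat \<Rightarrow> nat \<Rightarrow> 'q op" where
  "opmat_times_mat n W L = (\<lambda>a b. \<lambda>i j. \<Sum>c<n. W a c i j * L c b)"

definition mat_times_opmat :: "nat \<Rightarrow> (nat \<Rightarrow> nat \<Rightarrow> complex) \<Rightarrow> (nat \<Rightarrow> nat \<Rightarrow> 'q op) \<Rightarrow> nat \<Rightarrow> nat \<Rightarrow> 'q op" where
  "mat_times_opmat n L W = (\<lambda>a b. \<lambda>i j. \<Sum>c<n. L a c * W c b i j)"

end

(*
  Expand W in the orthonormal basis O_alpha (O_0 = 1): components A_alpha of the central block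
  and c_alpha of the first row. Being first degree means that the channel
  E(Y) = sum_alpha A_alpha^H Y A_alpha, whose matrix is the transfer matrix T_A, has spectral
  radius below 1, so its powers decay geometrically. In particular 1 - A_0 is invertible, and a
  row t with t (1 - A_0) = c_0 removes the identity component of the gauged first row
  g_alpha = c_alpha + t A_alpha - [alpha = 0] t. The Neumann series of E gives X >= 0 with
  X = sum_alpha g_alpha^H g_alpha + E(X). Factor X = L^H L with a generalised inverse R of L
  such that P = L R is an orthogonal projection. Then A'_alpha = L A_alpha R (plus 1 - P for
  alpha = 0) and c'_alpha = g_alpha R satisfy A'_alpha L = L A_alpha and c'_alpha L = g_alpha,
  and the fixed point equation says exactly that the first n + 1 columns of
  W_L = [[1, c', *], [0, A', *], [0, 0, 1]] are orthonormal. With the gauge matrix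
  [[1, t, 0], [0, L, 0], [0, 0, 1]] the remaining column of W_L is read off from W_L L = L W.
*)

theory Submission
  imports Defs "Jordan_Normal_Form.Spectral_Radius" "HOL-Library.Function_Algebras"
begin

lemma sum_swap4:
  "(\<Sum>a\<in>A. \<Sum>b\<in>B. \<Sum>c\<in>C. \<Sum>d\<in>D. f a b c d) = (\<Sum>c\<in>C. \<Sum>d\<in>D. \<Sum>a\<in>A. \<Sum>b\<in>B. f a b c d)"
proof -
  have "(\<Sum>a\<in>A. \<Sum>b\<in>B. \<Sum>c\<in>C. \<Sum>d\<in>D. f a b c d) = (\<Sum>a\<in>A. \<Sum>c\<in>C. \<Sum>b\<in>B. \<Sum>d\<in>D. f a b c d)"
    by (rule sum.cong[OF refl], rule sum.swap)
  also have "\<dots> = (\<Sum>c\<in>C. \<Sum>a\<in>A. \<Sum>b\<in>B. \<Sum>d\<in>D. f a b c d)"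
    by (rule sum.swap)
  also have "\<dots> = (\<Sum>c\<in>C. \<Sum>a\<in>A. \<Sum>d\<in>D. \<Sum>b\<in>B. f a b c d)"
    by (rule sum.cong[OF refl], rule sum.cong[OF refl], rule sum.swap)
  also have "\<dots> = (\<Sum>c\<in>C. \<Sum>d\<in>D. \<Sum>a\<in>A. \<Sum>b\<in>B. f a b c d)"
    by (rule sum.cong[OF refl], rule sum.swap)
  finally show ?thesis .
qed

lemma sum_lessThan_add: "(\<Sum>q<k + (n::nat). g q) = (\<Sum>q<k. g q) + (\<Sum>d<n. (g (k + d) :: 'a::comm_monoid_add))"
  by (induction n) (simp_all add: add.assoc)

lemma sum_pairs: "(\<Sum>q<(m::nat) * n. g q) = (\<Sum>c<m. \<Sum>d<n. (g (c * n + d) :: 'a::comm_monoid_add))"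
proof (induction m)
  case (Suc m)
  have "(\<Sum>q<Suc m * n. g q) = (\<Sum>q<m * n + n. g q)"
    by (simp add: add.commute)
  also have "\<dots> = (\<Sum>q<m * n. g q) + (\<Sum>d<n. g (m * n + d))"
    by (rule sum_lessThan_add)
  finally show ?case using Suc by simp
qed simp

lemma sum_lessThan_plus2_shift: "(\<Sum>k<n + 2. f k) = f 0 + (\<Sum>k<n. f (Suc k)) + (f (Suc n) :: 'a::comm_monoid_add)"
proof -
  have "(\<Sum>k<n + 2. f k) = (\<Sum>k<Suc n. f k) + f (Suc n)"
    by simp
  also have "(\<Sum>k<Suc n. f k) = f 0 + (\<Sum>k<n. f (Suc k))"
    by (rule sum.lessThan_Suc_shift)
  finally show ?thesis .
qed

lemma sum_atMost_shift: "(\<Sum>a\<le>n. f a) = f 0 + (\<Sum>i<n. (f (Suc i) :: 'a::comm_monoid_add))"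
  by (simp add: lessThan_Suc_atMost[symmetric] sum.lessThan_Suc_shift del: sum.lessThan_Suc)

lemma cnj_mult_self_nonneg: "0 \<le> cnj z * (z::complex)"
  by (simp add: complex_mult_cnj less_eq_complex_def)

lemma suminf_nonneg_complex:
  fixes f :: "nat \<Rightarrow> complex"
  assumes "summable f" "\<And>k. 0 \<le> f k"
  shows "0 \<le> suminf f"
proof -
  have "0 \<le> (\<Sum>k. Re (f k))"
    using assms by (intro suminf_nonneg summable_Re) (auto simp: less_eq_complex_def)
  moreover have "(\<lambda>k. Im (f k)) = (\<lambda>k. 0)"
    using assms(2) by (auto simp: less_eq_complex_def)
  ultimately show ?thesis
    using Re_suminf[OF assms(1)] Im_suminf[OF assms(1)] by (simp add: less_eq_complex_def)
qed

lemma suminf_double_sum: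
  assumes "\<And>c d. c < n \<Longrightarrow> d < n \<Longrightarrow> summable (\<lambda>k. f k c d)"
  shows "(\<Sum>c<n. \<Sum>d<n. w c d * suminf (\<lambda>k. f k c d))
    = suminf (\<lambda>k. \<Sum>c<n. \<Sum>d<n. w c d * (f k c d :: complex))"
proof -
  have sm: "summable (\<lambda>k. w c d * f k c d)" if "c < n" "d < n" for c d
    using assms[OF that] by (rule summable_mult)
  have "suminf (\<lambda>k. \<Sum>c<n. \<Sum>d<n. w c d * f k c d) = (\<Sum>c<n. suminf (\<lambda>k. \<Sum>d<n. w c d * f k c d))"
    using sm by (intro suminf_sum summable_sum) auto
  also have "\<dots> = (\<Sum>c<n. \<Sum>d<n. suminf (\<lambda>k. w c d * f k c d))"
    using sm by (intro sum.cong refl suminf_sum) auto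
  also have "\<dots> = (\<Sum>c<n. \<Sum>d<n. w c d * suminf (\<lambda>k. f k c d))"
    using assms by (intro sum.cong refl suminf_mult) auto
  finally show ?thesis ..
qed

section \<open>Matrices as functions on index pairs\<close>

text \<open>A matrix is a total function on index pairs; \<open>is_mat n A\<close> says that it vanishes outside
  \<open>{..<n}\<^sup>2\<close>, i.e. that it is an \<open>n \<times> n\<close> matrix. For complex numbers \<open>0 \<le> z\<close> means that
  \<open>z\<close> is real and nonnegative.\<close>

type_synonym cmat = "nat \<Rightarrow> nat \<Rightarrow> complex"

definition mmult :: "nat \<Rightarrow> cmat \<Rightarrow> cmat \<Rightarrow> cmat" where
  "mmult n A B = (\<lambda>i j. \<Sum>k<n. A i k * B k j)"

definition adj :: "cmat \<Rightarrow> cmat" where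
  "adj A = (\<lambda>i j. cnj (A j i))"

definition is_mat :: "nat \<Rightarrow> cmat \<Rightarrow> bool" where
  "is_mat n A \<longleftrightarrow> (\<forall>i j. \<not> (i < n \<and> j < n) \<longrightarrow> A i j = 0)"

definition idm :: "nat \<Rightarrow> cmat" where
  "idm n = (\<lambda>i j. if i = j \<and> i < n then 1 else 0)"

definition mvec :: "nat \<Rightarrow> cmat \<Rightarrow> (nat \<Rightarrow> complex) \<Rightarrow> nat \<Rightarrow> complex" where
  "mvec n A v = (\<lambda>i. \<Sum>j<n. A i j * v j)"

definition vmat :: "nat \<Rightarrow> (nat \<Rightarrow> complex) \<Rightarrow> cmat \<Rightarrow> nat \<Rightarrow> complex" where
  "vmat n v M = (\<lambda>j. \<Sum>k<n. v k * M k j)"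

definition quad_form :: "nat \<Rightarrow> cmat \<Rightarrow> (nat \<Rightarrow> complex) \<Rightarrow> complex" where
  "quad_form n Y v = (\<Sum>a<n. \<Sum>b<n. cnj (v a) * Y a b * v b)"

definition psd :: "nat \<Rightarrow> cmat \<Rightarrow> bool" where
  "psd n Y \<longleftrightarrow> (\<forall>v. 0 \<le> quad_form n Y v)"

definition hermitian :: "cmat \<Rightarrow> bool" where
  "hermitian Y \<longleftrightarrow> adj Y = Y"

definition mat_pow :: "nat \<Rightarrow> cmat \<Rightarrow> nat \<Rightarrow> cmat" where
  "mat_pow n M k = ((\<lambda>X. mmult n X M) ^^ k) (idm n)"

definition restrict_mat :: "nat \<Rightarrow> cmat \<Rightarrow> cmat" where
  "restrict_mat n M = (\<lambda>i j. if i < n \<and> j < n then M i j else 0)"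

lemma mmult_assoc: "mmult n (mmult n A B) C = mmult n A (mmult n B C)"
  unfolding mmult_def
  by (auto simp: sum_distrib_left sum_distrib_right mult.assoc intro!: ext sum.swap)

lemma adj_mmult: "adj (mmult n A B) = mmult n (adj B) (adj A)"
  unfolding mmult_def adj_def by (auto simp: mult.commute intro!: ext)

lemma adj_adj [simp]: "adj (adj A) = A"
  unfolding adj_def by auto

lemma adj_idm [simp]: "adj (idm n) = idm n"
  unfolding adj_def idm_def by (auto intro!: ext)

lemma adj_add: "adj (A + B) = adj A + adj B"
  unfolding adj_def by (auto intro!: ext)

lemma adj_diff: "adj (A - B) = adj A - adj B"
  unfolding adj_def by (auto intro!: ext)

lemma mmult_add_left: "mmult n (A + B) C = mmult n A C + mmult n B C"
  unfolding mmult_def by (auto simp: distrib_right sum.distrib intro!: ext)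

lemma mmult_add_right: "mmult n C (A + B) = mmult n C A + mmult n C B"
  unfolding mmult_def by (auto simp: distrib_left sum.distrib intro!: ext)

lemma mmult_diff_left: "mmult n (A - B) C = mmult n A C - mmult n B C"
  unfolding mmult_def by (auto simp: left_diff_distrib sum_subtractf intro!: ext)

lemma mmult_diff_right: "mmult n C (A - B) = mmult n C A - mmult n C B"
  unfolding mmult_def by (auto simp: right_diff_distrib sum_subtractf intro!: ext)

lemma mmult_zero_left [simp]: "mmult n 0 C = 0"
  unfolding mmult_def by (auto intro!: ext)

lemma mmult_zero_right [simp]: "mmult n C 0 = 0"
  unfolding mmult_def by (auto intro!: ext)

lemma mmult_sum_left: "mmult n (\<lambda>i j. \<Sum>a<N. F a i j) C = (\<lambda>i j. \<Sum>a<N. mmult n (F a) C i j)"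
  unfolding mmult_def by (auto simp: sum_distrib_right intro!: ext sum.swap)

lemma mmult_sum_right: "mmult n C (\<lambda>i j. \<Sum>a<N. F a i j) = (\<lambda>i j. \<Sum>a<N. mmult n C (F a) i j)"
  unfolding mmult_def by (auto simp: sum_distrib_left intro!: ext sum.swap)

lemma is_mat_mmult: "is_mat n A \<Longrightarrow> is_mat n B \<Longrightarrow> is_mat n (mmult n A B)"
  unfolding is_mat_def mmult_def by auto

lemma is_mat_adj: "is_mat n A \<Longrightarrow> is_mat n (adj A)"
  unfolding is_mat_def adj_def by auto

lemma is_mat_idm: "is_mat n (idm n)"
  unfolding is_mat_def idm_def by auto

lemma is_mat_diff: "is_mat n A \<Longrightarrow> is_mat n B \<Longrightarrow> is_mat n (A - B)"
  unfolding is_mat_def by auto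

lemma is_mat_Suc: "is_mat n A \<Longrightarrow> is_mat (Suc n) A"
  unfolding is_mat_def by auto

lemma is_mat_restrict_mat: "is_mat n (restrict_mat n M)"
  unfolding is_mat_def restrict_mat_def by auto

lemma mmult_idm_left:
  assumes "is_mat n A"
  shows "mmult n (idm n) A = A"
proof (intro ext)
  fix i j
  have "mmult n (idm n) A i j = (\<Sum>k<n. if k = i then A i j else 0)"
    unfolding mmult_def idm_def by (intro sum.cong) auto
  then show "mmult n (idm n) A i j = A i j"
    using assms by (auto simp: is_mat_def)
qed

lemma mmult_idm_right:
  assumes "is_mat n A"
  shows "mmult n A (idm n) = A"
proof (intro ext)
  fix i j
  have "mmult n A (idm n) i j = (\<Sum>k<n. if k = j then A i j else 0)"
    unfolding mmult_def idm_def by (intro sum.cong) auto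
  then show "mmult n A (idm n) i j = A i j"
    using assms by (auto simp: is_mat_def)
qed

lemma mmult_Suc_is_mat: "is_mat n A \<Longrightarrow> mmult (Suc n) A B = mmult n A B"
  unfolding mmult_def is_mat_def by (auto intro!: ext)

lemma hermitian_cnj: "hermitian X \<Longrightarrow> cnj (X i j) = X j i"
  unfolding hermitian_def adj_def by (metis)

lemma mvec_mvec: "mvec n A (mvec n B v) = mvec n (mmult n A B) v"
  unfolding mvec_def mmult_def
  by (auto simp: sum_distrib_left sum_distrib_right mult.assoc intro!: ext sum.swap)

lemma mvec_column: "mvec n M (\<lambda>i. K i j) k = mmult n M K k j"
  unfolding mvec_def mmult_def by simp

lemma mvec_idm:
  assumes "i < n"
  shows "mvec n (idm n) v i = v i"
proof -
  have "mvec n (idm n) v i = (\<Sum>j<n. if j = i then v i else 0)"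
    unfolding mvec_def idm_def by (intro sum.cong) auto
  then show ?thesis using assms by simp
qed

lemma quad_form_congruence: "quad_form n (mmult n (mmult n (adj B) Y) B) v = quad_form n Y (mvec n B v)"
proof -
  have "quad_form n (mmult n (mmult n (adj B) Y) B) v
      = (\<Sum>a<n. \<Sum>b<n. \<Sum>k<n. \<Sum>m<n. cnj (B m a * v a) * Y m k * (B k b * v b))"
    unfolding quad_form_def mmult_def adj_def
    by (simp add: sum_distrib_left sum_distrib_right mult_ac)
  also have "\<dots> = (\<Sum>k<n. \<Sum>m<n. \<Sum>a<n. \<Sum>b<n. cnj (B m a * v a) * Y m k * (B k b * v b))"
    by (rule sum_swap4)
  also have "\<dots> = quad_form n Y (mvec n B v)"
    unfolding quad_form_def mvec_def
    by (subst sum.swap) (simp add: sum_distrib_left sum_distrib_right mult_ac)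
  finally show ?thesis .
qed

lemma quad_form_add: "quad_form n (A + B) v = quad_form n A v + quad_form n B v"
  unfolding quad_form_def by (simp add: distrib_left distrib_right sum.distrib)

lemma quad_form_sum: "quad_form n (\<lambda>i j. \<Sum>a<N. F a i j) v = (\<Sum>a<N. quad_form n (F a) v)"
proof -
  have "quad_form n (\<lambda>i j. \<Sum>a<N. F a i j) v = (\<Sum>i<n. \<Sum>j<n. \<Sum>a<N. cnj (v i) * F a i j * v j)"
    unfolding quad_form_def by (simp add: sum_distrib_left sum_distrib_right)
  also have "\<dots> = (\<Sum>i<n. \<Sum>a<N. \<Sum>j<n. cnj (v i) * F a i j * v j)"
    by (rule sum.cong[OF refl], rule sum.swap)
  also have "\<dots> = (\<Sum>a<N. \<Sum>i<n. \<Sum>j<n. cnj (v i) * F a i j * v j)"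
    by (rule sum.swap)
  finally show ?thesis unfolding quad_form_def .
qed

lemma quad_form_gram: "quad_form n (mmult n (adj L) L) v = (\<Sum>k<n. cnj (mvec n L v k) * mvec n L v k)"
proof -
  have "quad_form n (mmult n (adj L) L) v = (\<Sum>a<n. \<Sum>b<n. \<Sum>k<n. cnj (L k a * v a) * (L k b * v b))"
    unfolding quad_form_def mmult_def adj_def by (simp add: sum_distrib_left sum_distrib_right mult_ac)
  also have "\<dots> = (\<Sum>a<n. \<Sum>k<n. \<Sum>b<n. cnj (L k a * v a) * (L k b * v b))"
    by (rule sum.cong[OF refl], rule sum.swap)
  also have "\<dots> = (\<Sum>k<n. \<Sum>a<n. \<Sum>b<n. cnj (L k a * v a) * (L k b * v b))"
    by (rule sum.swap)
  also have "\<dots> = (\<Sum>k<n. cnj (mvec n L v k) * mvec n L v k)"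
    unfolding mvec_def cnj_sum sum_product by simp
  finally show ?thesis .
qed

lemma quad_form_gram_nonneg: "0 \<le> quad_form n (mmult n (adj L) L) v"
  unfolding quad_form_gram by (auto intro!: sum_nonneg cnj_mult_self_nonneg)

lemma quad_form_gram_eq_0D: "quad_form n (mmult n (adj L) L) v = 0 \<Longrightarrow> k < n \<Longrightarrow> mvec n L v k = 0"
  unfolding quad_form_gram by (subst (asm) sum_nonneg_eq_0_iff) (auto intro: cnj_mult_self_nonneg)

lemma quad_form_Suc:
  "quad_form (Suc n) X v = quad_form n X v + (\<Sum>b<n. cnj (v n) * X n b * v b)
     + (\<Sum>a<n. cnj (v a) * X a n * v n) + cnj (v n) * X n n * v n"
  unfolding quad_form_def by (simp add: sum.distrib)

lemma quad_form_cong: "(\<And>i. i < n \<Longrightarrow> v i = w i) \<Longrightarrow> quad_form n X v = quad_form n X w"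
  unfolding quad_form_def by (auto intro!: sum.cong)

lemma quad_form_unit: "quad_form n X (\<lambda>i. if i = p then 1 else 0) = (if p < n then X p p else 0)"
  unfolding quad_form_def
  by (simp add: if_distrib[where f = "\<lambda>x. _ * x"] if_distrib[where f = "\<lambda>x. x * _"]
      if_distrib[where f = cnj] cong: if_cong)

lemma quad_form_idm: "quad_form n (idm n) v = (\<Sum>a<n. cnj (v a) * v a)"
proof -
  have "quad_form n (idm n) v = quad_form n (mmult n (adj (idm n)) (idm n)) v"
    using mmult_idm_left[OF is_mat_idm] by simp
  also have "\<dots> = (\<Sum>a<n. cnj (v a) * v a)"
    unfolding quad_form_gram by (intro sum.cong refl) (simp add: mvec_idm)
  finally show ?thesis .
qed

lemma psd_idm: "psd n (idm n)"
  unfolding psd_def quad_form_idm by (auto intro!: sum_nonneg cnj_mult_self_nonneg)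

lemma psd_diag_nonneg: "psd n X \<Longrightarrow> i < n \<Longrightarrow> 0 \<le> X i i"
  using quad_form_unit[of n X i] unfolding psd_def by metis

lemma psd_Suc_imp_psd:
  assumes "psd (Suc n) X"
  shows "psd n X"
  unfolding psd_def
proof
  fix w
  define v :: "nat \<Rightarrow> complex" where "v = (\<lambda>i. if i < n then w i else 0)"
  have "quad_form n X v = quad_form n X w"
    by (rule quad_form_cong) (simp add: v_def)
  then have "quad_form (Suc n) X v = quad_form n X w"
    unfolding quad_form_Suc by (simp add: v_def)
  then show "0 \<le> quad_form n X w"
    using assms unfolding psd_def by metis
qed

section \<open>Gram factorisation of positive semidefinite matrices\<close>

lemma psd_zero_diag_row:
  assumes psd: "psd (Suc n) X" and herm: "hermitian X" and Xnn: "X n n = 0" and j: "j < n"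
  shows "X n j = 0"
proof (rule ccontr)
  assume nz: "X n j \<noteq> 0"
  define x where "x = X n j"
  define t where "t = (Re (X j j) + 1) / (2 * (cmod x)^2)"
  \<comment> \<open>The test vector \<open>e\<^sub>j - t x e\<^sub>n\<close> gives the quadratic form the value \<open>X j j - 2 t \<bar>x\<bar>\<^sup>2 = -1\<close>.\<close>
  define v where "v = (\<lambda>i. if i = j then 1 else if i = n then - complex_of_real t * x else 0)"
  have "quad_form n X v = quad_form n X (\<lambda>i. if i = j then 1 else 0)"
    by (rule quad_form_cong) (auto simp: v_def)
  then have q1: "quad_form n X v = X j j"
    using j by (simp add: quad_form_unit)
  have q2: "(\<Sum>b<n. cnj (v n) * X n b * v b) = cnj (v n) * x"
  proof -
    have "(\<Sum>b<n. cnj (v n) * X n b * v b) = (\<Sum>b<n. if b = j then cnj (v n) * x else 0)"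
      by (rule sum.cong) (auto simp: v_def x_def)
    then show ?thesis using j by simp
  qed
  have q3: "(\<Sum>a<n. cnj (v a) * X a n * v n) = cnj x * v n"
  proof -
    have "(\<Sum>a<n. cnj (v a) * X a n * v n) = (\<Sum>a<n. if a = j then cnj x * v n else 0)"
      using hermitian_cnj[OF herm, of n j] by (intro sum.cong) (auto simp: v_def x_def)
    then show ?thesis using j by simp
  qed
  have vn: "v n = - complex_of_real t * x"
    using j by (simp add: v_def)
  have "quad_form (Suc n) X v = X j j - 2 * complex_of_real t * (cnj x * x)"
    unfolding quad_form_Suc q1 q2 q3 Xnn unfolding vn by (simp add: algebra_simps)
  moreover have "0 \<le> quad_form (Suc n) X v"
    using psd unfolding psd_def by blast
  ultimately have "Re (2 * complex_of_real t * (cnj x * x)) \<le> Re (X j j)"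
    by (simp add: less_eq_complex_def)
  moreover have "Re (2 * complex_of_real t * (cnj x * x)) = Re (X j j) + 1"
  proof -
    have "cnj x * x = of_real ((cmod x)^2)"
      using complex_norm_square[of x] by (simp add: mult.commute)
    moreover have "cmod x \<noteq> 0"
      using nz x_def by simp
    ultimately show ?thesis unfolding t_def by (simp add: field_simps)
  qed
  ultimately show False by simp
qed

definition schur_complement :: "nat \<Rightarrow> cmat \<Rightarrow> cmat" where
  "schur_complement n X = (\<lambda>i j. if i < n \<and> j < n then X i j - X i n * X n j / X n n else 0)"

lemma is_mat_schur_complement: "is_mat n (schur_complement n X)"
  unfolding is_mat_def schur_complement_def by auto

lemma hermitian_schur_complement: "hermitian X \<Longrightarrow> hermitian (schur_complement n X)"
  unfolding hermitian_def adj_def schur_complement_def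
  by (auto intro!: ext simp: hermitian_cnj[unfolded hermitian_def adj_def])

lemma psd_schur_complement:
  assumes psd: "psd (Suc n) X" and herm: "hermitian X" and Xnn: "X n n \<noteq> 0"
  shows "psd n (schur_complement n X)"
  unfolding psd_def
proof
  fix w
  define \<beta> where "\<beta> = (\<Sum>b<n. X n b * w b)"
  \<comment> \<open>Completing the square in the last coordinate.\<close>
  define v where "v = (\<lambda>i. if i < n then w i else if i = n then - \<beta> / X n n else 0)"
  have hX: "cnj (X i j) = X j i" for i j
    using hermitian_cnj[OF herm] .
  have vn: "v n = - \<beta> / X n n"
    unfolding v_def by simp
  have e1: "quad_form n X v = quad_form n X w"
    by (rule quad_form_cong) (simp add: v_def)
  have e2: "(\<Sum>b<n. cnj (v n) * X n b * v b) = cnj (v n) * \<beta>"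
    unfolding \<beta>_def sum_distrib_left by (rule sum.cong) (auto simp: v_def mult.assoc)
  have cb: "cnj \<beta> = (\<Sum>b<n. cnj (w b) * X b n)"
    unfolding \<beta>_def cnj_sum by (rule sum.cong) (auto simp: hX mult.commute)
  have e3: "(\<Sum>i<n. cnj (v i) * X i n * v n) = cnj \<beta> * v n"
    unfolding cb sum_distrib_right by (rule sum.cong) (auto simp: v_def)
  have e4: "quad_form n (schur_complement n X) w = quad_form n X w - cnj \<beta> * \<beta> / X n n"
  proof -
    have "quad_form n (schur_complement n X) w
        = (\<Sum>i<n. \<Sum>j<n. cnj (w i) * X i j * w j - (cnj (w i) * X i n) * (X n j * w j) / X n n)"
      unfolding quad_form_def schur_complement_def by (intro sum.cong refl) (simp add: algebra_simps)
    also have "\<dots> = quad_form n X w - (\<Sum>i<n. \<Sum>j<n. (cnj (w i) * X i n) * (X n j * w j)) / X n n"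
      unfolding quad_form_def by (simp add: sum_subtractf sum_divide_distrib)
    also have "(\<Sum>i<n. \<Sum>j<n. (cnj (w i) * X i n) * (X n j * w j)) = cnj \<beta> * \<beta>"
      by (simp only: cb, simp only: \<beta>_def sum_product)
    finally show ?thesis .
  qed
  have "quad_form (Suc n) X v = quad_form n X w + cnj (v n) * \<beta> + cnj \<beta> * v n + cnj (v n) * X n n * v n"
    by (simp only: quad_form_Suc e1 e2 e3)
  also have "\<dots> = quad_form n (schur_complement n X) w"
    unfolding e4 vn using Xnn hX[of n n] by (simp add: field_simps)
  finally show "0 \<le> quad_form n (schur_complement n X) w"
    using psd unfolding psd_def by metis
qed

text \<open>\<open>R\<close> is a generalised inverse of \<open>L\<close> such that \<open>L R\<close> is the orthogonal projection onto the
  range of \<open>L\<close>.\<close>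

definition gram_factorization :: "nat \<Rightarrow> cmat \<Rightarrow> cmat \<Rightarrow> cmat \<Rightarrow> bool" where
  "gram_factorization n X L R \<longleftrightarrow> is_mat n L \<and> is_mat n R \<and> mmult n (adj L) L = X \<and>
     mmult n (mmult n L R) L = L \<and> hermitian (mmult n L R)"

lemma gram_factorization_Suc:
  assumes "gram_factorization n X L R"
  shows "gram_factorization (Suc n) X L R"
proof -
  have "is_mat n L" "is_mat n R" "is_mat n (mmult n L R)"
    using assms is_mat_mmult unfolding gram_factorization_def by blast+
  then show ?thesis
    using assms is_mat_adj unfolding gram_factorization_def by (simp add: is_mat_Suc mmult_Suc_is_mat)
qed

lemma bordered_gram:
  fixes n :: nat and X L0 :: cmat and s :: complex
  defines "L \<equiv> \<lambda>i j. if i = n \<and> j \<le> n then X n j / s else L0 i j"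
  assumes X: "is_mat (Suc n) X" "hermitian X" and s: "X n n = s * s" "s \<noteq> 0" "cnj s = s"
    and L0: "is_mat n L0" "mmult n (adj L0) L0 = schur_complement n X"
  shows "mmult (Suc n) (adj L) L = X"
proof (intro ext)
  fix i j
  have hX: "cnj (X i j) = X j i" for i j
    using hermitian_cnj[OF X(2)] .
  have "(\<Sum>k<n. cnj (L k i) * L k j) = (\<Sum>k<n. cnj (L0 k i) * L0 k j)"
    by (rule sum.cong) (auto simp: L_def)
  also have "\<dots> = schur_complement n X i j"
    using fun_cong[OF fun_cong[OF L0(2)], of i j] unfolding mmult_def adj_def by simp
  finally have "mmult (Suc n) (adj L) L i j = schur_complement n X i j + cnj (L n i) * L n j"
    unfolding mmult_def adj_def by simp
  also have "\<dots> = X i j"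
  proof (cases "i \<le> n \<and> j \<le> n")
    case True
    then have last_row: "cnj (L n i) * L n j = X i n * X n j / X n n"
      unfolding L_def using s by (simp add: hX)
    consider "i < n \<and> j < n" | "i = n" | "j = n"
      using True by force
    then show ?thesis
      using s unfolding last_row by cases (auto simp: schur_complement_def)
  next
    case False
    then show ?thesis
      using X(1) L0(1) unfolding L_def schur_complement_def is_mat_def by auto
  qed
  finally show "mmult (Suc n) (adj L) L i j = X i j" .
qed

lemma bordered_pinv:
  fixes n :: nat and X L0 R0 :: cmat and s :: complex
  defines "L \<equiv> \<lambda>i j. if i = n \<and> j \<le> n then X n j / s else L0 i j"
    and "R \<equiv> \<lambda>i j. if i = n \<and> j < n then - (\<Sum>k<n. X n k / s * R0 k j) / s
                  else if i = n \<and> j = n then 1 / s else R0 i j"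
  assumes s: "X n n = s * s" "s \<noteq> 0" and L0: "is_mat n L0" "is_mat n R0"
  shows "mmult (Suc n) L R = (\<lambda>i j. if i = n \<and> j = n then 1 else mmult n L0 R0 i j)"
proof (intro ext)
  fix i j
  have P0n: "mmult n L0 R0 n j = 0" "mmult n L0 R0 i n = 0"
    using is_mat_mmult[OF L0] unfolding is_mat_def by auto
  have "(\<Sum>k<n. L i k * R k j) = (\<Sum>k<n. L i k * R0 k j)"
    by (rule sum.cong) (auto simp: R_def)
  then have "mmult (Suc n) L R i j = (\<Sum>k<n. L i k * R0 k j) + L i n * R n j"
    unfolding mmult_def by simp
  also have "\<dots> = (if i = n \<and> j = n then 1 else mmult n L0 R0 i j)"
  proof (cases "i = n")
    case False
    have "(\<Sum>k<n. L i k * R0 k j) = mmult n L0 R0 i j"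
      unfolding mmult_def by (rule sum.cong) (auto simp: L_def False)
    then show ?thesis
      using False L0(1) by (simp add: L_def is_mat_def)
  next
    case True
    have row: "(\<Sum>k<n. L i k * R0 k j) = (\<Sum>k<n. X n k / s * R0 k j)"
      by (rule sum.cong) (auto simp: L_def True)
    have Lnn: "L i n = s"
      using True s by (simp add: L_def)
    consider "j < n" | "j = n" | "n < j"
      by linarith
    then show ?thesis
    proof cases
      case 1
      then show ?thesis unfolding row Lnn using True s by (simp add: R_def P0n)
    next
      case 2
      then show ?thesis unfolding row Lnn using True s L0(2) by (simp add: R_def is_mat_def)
    next
      case 3
      then show ?thesis unfolding row Lnn using True L0(2) by (simp add: R_def P0n is_mat_def)
    qed
  qed
  finally show "mmult (Suc n) L R i j = (if i = n \<and> j = n then 1 else mmult n L0 R0 i j)" .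
qed

lemma bordered_projection:
  fixes n :: nat and X L0 P0 :: cmat and s :: complex
  defines "L \<equiv> \<lambda>i j. if i = n \<and> j \<le> n then X n j / s else L0 i j"
    and "P \<equiv> \<lambda>i j. if i = n \<and> j = n then 1 else P0 i j"
  assumes L0: "is_mat n L0" and P0: "is_mat n P0" "mmult n P0 L0 = L0"
  shows "mmult (Suc n) P L = L"
proof (intro ext)
  fix i j
  have "mmult (Suc n) P L i j = (\<Sum>k<n. P i k * L k j) + P i n * L n j"
    unfolding mmult_def by simp
  also have "\<dots> = L i j"
  proof (cases "i = n")
    case True
    then show ?thesis
      using P0(1) by (simp add: P_def is_mat_def)
  next
    case False
    have "(\<Sum>k<n. P i k * L k j) = mmult n P0 L0 i j"
      unfolding mmult_def by (rule sum.cong) (auto simp: P_def L_def)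
    then show ?thesis
      using False L0 P0 by (simp add: P_def L_def is_mat_def)
  qed
  finally show "mmult (Suc n) P L i j = L i j" .
qed

lemma gram_factorization_extend:
  assumes X: "is_mat (Suc n) X" "hermitian X" and s: "X n n = s * s" "s \<noteq> 0" "cnj s = s"
    and fac: "gram_factorization n (schur_complement n X) L0 R0"
  shows "\<exists>L R. gram_factorization (Suc n) X L R"
proof -
  define L where "L = (\<lambda>i j. if i = n \<and> j \<le> n then X n j / s else L0 i j)"
  define R where "R = (\<lambda>i j. if i = n \<and> j < n then - (\<Sum>k<n. X n k / s * R0 k j) / s
                          else if i = n \<and> j = n then 1 / s else R0 i j)"
  define P where "P = (\<lambda>i j. if i = n \<and> j = n then 1 else mmult n L0 R0 i j)"
  have L0: "is_mat n L0" "is_mat n R0" "mmult n (adj L0) L0 = schur_complement n X"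
    "mmult n (mmult n L0 R0) L0 = L0" "hermitian (mmult n L0 R0)"
    using fac unfolding gram_factorization_def by auto
  have "mmult (Suc n) L R = P"
    unfolding L_def R_def P_def by (rule bordered_pinv[where X = X, OF s(1,2) L0(1,2)])
  moreover have "mmult (Suc n) P L = L"
    unfolding L_def P_def by (rule bordered_projection[OF L0(1) is_mat_mmult[OF L0(1,2)] L0(4)])
  moreover have "hermitian P"
    using hermitian_cnj[OF L0(5)] unfolding hermitian_def adj_def P_def by (auto intro!: ext)
  moreover have "is_mat (Suc n) L" "is_mat (Suc n) R"
    using L0(1,2) unfolding is_mat_def L_def R_def by auto
  moreover have "mmult (Suc n) (adj L) L = X"
    unfolding L_def by (rule bordered_gram[OF X s L0(1,3)])
  ultimately show ?thesis
    unfolding gram_factorization_def by metis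
qed

lemma psd_gram_factorization:
  "is_mat n X \<Longrightarrow> hermitian X \<Longrightarrow> psd n X \<Longrightarrow> \<exists>L R. gram_factorization n X L R"
proof (induction n arbitrary: X)
  case 0
  then have "X = 0"
    unfolding is_mat_def by (auto intro!: ext)
  then have "gram_factorization 0 X 0 0"
    unfolding gram_factorization_def by (simp add: is_mat_def hermitian_def adj_def mmult_def zero_fun_def)
  then show ?case by blast
next
  case (Suc n)
  show ?case
  proof (cases "X n n = 0")
    case True
    have "X n j = 0" "X j n = 0" if "j < n" for j
      using psd_zero_diag_row[OF Suc.prems(3,2) True that] hermitian_cnj[OF Suc.prems(2), of n j] by auto
    then have "is_mat n X"
      using Suc.prems(1) True unfolding is_mat_def by (metis less_SucE)
    then obtain L R where "gram_factorization n X L R"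
      using Suc.IH Suc.prems(2) psd_Suc_imp_psd[OF Suc.prems(3)] by blast
    then show ?thesis by (blast intro: gram_factorization_Suc)
  next
    case False
    obtain r where r: "X n n = complex_of_real r" "0 < r"
      using psd_diag_nonneg[OF Suc.prems(3), of n] False
      by (auto simp: less_eq_complex_def complex_eq_iff intro: exI[of _ "Re (X n n)"])
    define s where "s = complex_of_real (sqrt r)"
    have s: "X n n = s * s" "s \<noteq> 0" "cnj s = s"
      unfolding s_def r(1) using r(2) by (simp_all flip: of_real_mult)
    obtain L0 R0 where "gram_factorization n (schur_complement n X) L0 R0"
      using Suc.IH is_mat_schur_complement hermitian_schur_complement[OF Suc.prems(2)]
        psd_schur_complement[OF Suc.prems(3,2) False] by blast
    then show ?thesis by (rule gram_factorization_extend[OF Suc.prems(1,2) s])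
  qed
qed

lemma gram_factorization_projection:
  assumes "gram_factorization n X L R"
  defines "P \<equiv> mmult n L R"
  shows "adj P = P" "mmult n P P = P" "mmult n (idm n - P) L = 0" "mmult n (adj L) (idm n - P) = 0"
    "mmult n L (idm n - mmult n R L) = 0"
proof -
  have L: "is_mat n L" and PL: "mmult n P L = L" and hP: "hermitian P"
    using assms unfolding gram_factorization_def by auto
  show adjP: "adj P = P"
    using hP unfolding hermitian_def .
  show "mmult n P P = P"
    using PL unfolding P_def by (simp add: mmult_assoc[symmetric])
  show "mmult n (idm n - P) L = 0"
    unfolding mmult_diff_left mmult_idm_left[OF L] PL by simp
  show "mmult n (adj L) (idm n - P) = 0"
    using arg_cong[OF PL, of adj] mmult_idm_right[OF is_mat_adj[OF L]]
    by (simp add: adj_mmult adjP mmult_diff_right)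
  show "mmult n L (idm n - mmult n R L) = 0"
    using PL unfolding mmult_diff_right mmult_idm_right[OF L] P_def by (simp add: mmult_assoc)
qed

section \<open>The channel of a family of matrices and the left canonical gauge\<close>

definition gram_sum :: "nat \<Rightarrow> nat \<Rightarrow> (nat \<Rightarrow> cmat) \<Rightarrow> cmat" where
  "gram_sum n N G = (\<lambda>i j. \<Sum>a<N. mmult n (adj (G a)) (G a) i j)"

definition channel :: "nat \<Rightarrow> nat \<Rightarrow> (nat \<Rightarrow> cmat) \<Rightarrow> cmat \<Rightarrow> cmat" where
  "channel n N A Y = (\<lambda>i j. \<Sum>a<N. mmult n (mmult n (adj (A a)) Y) (A a) i j)"

lemma quad_form_gram_sum:
  "quad_form n (gram_sum n N G) v = (\<Sum>a<N. quad_form n (mmult n (adj (G a)) (G a)) v)"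
  unfolding gram_sum_def by (rule quad_form_sum)

lemma quad_form_channel: "quad_form n (channel n N A Y) v = (\<Sum>a<N. quad_form n Y (mvec n (A a) v))"
  unfolding channel_def quad_form_sum quad_form_congruence ..

lemma psd_channel: "psd n Y \<Longrightarrow> psd n (channel n N A Y)"
  unfolding psd_def quad_form_channel by (auto intro!: sum_nonneg)

lemma hermitian_channel:
  assumes "hermitian Y"
  shows "hermitian (channel n N A Y)"
proof -
  have "adj (mmult n (mmult n (adj (A a)) Y) (A a)) = mmult n (mmult n (adj (A a)) Y) (A a)" for a
    using assms unfolding hermitian_def by (simp add: adj_mmult mmult_assoc)
  then have "cnj (mmult n (mmult n (adj (A a)) Y) (A a) j i) = mmult n (mmult n (adj (A a)) Y) (A a) i j"
    for a i j
    unfolding adj_def by metis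
  then show ?thesis
    unfolding hermitian_def channel_def by (auto simp: adj_def intro!: ext)
qed

lemma is_mat_channel: "(\<And>a. is_mat n (A a)) \<Longrightarrow> is_mat n (channel n N A Y)"
  unfolding channel_def is_mat_def mmult_def adj_def by auto

lemma hermitian_channel_power: "hermitian C \<Longrightarrow> hermitian ((channel n N A ^^ k) C)"
  by (induction k) (auto intro: hermitian_channel)

lemma psd_channel_power: "psd n C \<Longrightarrow> psd n ((channel n N A ^^ k) C)"
  by (induction k) (auto intro: psd_channel)

lemma is_mat_gram_sum: "(\<And>a. is_mat n (G a)) \<Longrightarrow> is_mat n (gram_sum n N G)"
  unfolding gram_sum_def is_mat_def mmult_def adj_def by auto

lemma hermitian_gram_sum: "hermitian (gram_sum n N G)"
  unfolding hermitian_def gram_sum_def adj_def mmult_def by (auto intro!: ext simp: mult.commute)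

lemma psd_gram_sum: "psd n (gram_sum n N G)"
  unfolding psd_def quad_form_gram_sum by (auto intro!: sum_nonneg quad_form_gram_nonneg)

lemma gram_sum_single_row:
  assumes "\<And>a i j. i \<noteq> 0 \<Longrightarrow> G a i j = 0" and "0 < n"
  shows "gram_sum n N G j k = (\<Sum>a<N. cnj (G a 0 j) * G a 0 k)"
proof -
  have "mmult n (adj (G a)) (G a) j k = (\<Sum>i<n. if i = 0 then cnj (G a 0 j) * G a 0 k else 0)" for a
    unfolding mmult_def adj_def using assms(1) by (intro sum.cong refl) auto
  then show ?thesis
    unfolding gram_sum_def using assms(2) by simp
qed

lemma gram_sum_mmult_right:
  "gram_sum n N (\<lambda>a. mmult n (F a) R) = mmult n (adj R) (mmult n (gram_sum n N F) R)"
  unfolding gram_sum_def mmult_sum_left mmult_sum_right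
  by (simp add: adj_mmult mmult_assoc)

lemma channel_gram: "channel n N A (mmult n (adj L) L) = gram_sum n N (\<lambda>a. mmult n L (A a))"
  unfolding channel_def gram_sum_def by (simp add: adj_mmult mmult_assoc)

lemma gram_sum_add_orthogonal:
  assumes N: "0 < N" and orth: "\<And>a. mmult n (adj (B a)) D = 0"
  shows "gram_sum n N (\<lambda>a. B a + (if a = 0 then D else 0)) = gram_sum n N B + mmult n (adj D) D"
proof -
  have summand: "mmult n (adj (B a + (if a = 0 then D else 0))) (B a + (if a = 0 then D else 0)) i j
      = mmult n (adj (B a)) (B a) i j + (if a = 0 then mmult n (adj D) D i j else 0)" for a i j
  proof (cases "a = 0")
    case True
    have "mmult n (adj D) (B a) = adj (mmult n (adj (B a)) D)"
      by (simp add: adj_mmult)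
    then have "mmult n (adj D) (B a) = 0"
      using orth by (simp add: adj_def zero_fun_def)
    then show ?thesis
      using True orth by (simp add: adj_add mmult_add_left mmult_add_right)
  qed simp
  show ?thesis
    using N unfolding gram_sum_def summand by (auto intro!: ext simp: sum.distrib)
qed

lemma fixed_point_quad_form_eq_0:
  assumes psd: "psd n X" and fx: "X = gram_sum n N G + channel n N A X"
    and v: "quad_form n X v = 0" and a: "a < N"
  shows "quad_form n (mmult n (adj (G a)) (G a)) v = 0" "quad_form n X (mvec n (A a) v) = 0"
proof -
  define g where "g = (\<lambda>b. quad_form n (mmult n (adj (G b)) (G b)) v)"
  define h where "h = (\<lambda>b. quad_form n X (mvec n (A b) v))"
  have g: "0 \<le> g b" for b
    unfolding g_def by (rule quad_form_gram_nonneg)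
  have h: "0 \<le> h b" for b
    using psd unfolding psd_def h_def by blast
  have "quad_form n X v = sum g {..<N} + sum h {..<N}"
    unfolding g_def h_def by (subst fx) (simp only: quad_form_add quad_form_gram_sum quad_form_channel)
  then have "sum g {..<N} = 0 \<and> sum h {..<N} = 0"
    using v g h by (simp add: add_nonneg_eq_0_iff sum_nonneg)
  then show "quad_form n (mmult n (adj (G a)) (G a)) v = 0" "quad_form n X (mvec n (A a) v) = 0"
    using a g h by (simp_all add: sum_nonneg_eq_0_iff g_def h_def)
qed

lemma fixed_point_kernel:
  assumes A: "is_mat n (A a)" and G: "is_mat n (G a)" and fac: "gram_factorization n X L R"
    and psd: "psd n X" and fx: "X = gram_sum n N G + channel n N A X" and a: "a < N"
  defines "K \<equiv> idm n - mmult n R L"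
  shows "mmult n (G a) K = 0" "mmult n L (mmult n (A a) K) = 0"
proof -
  have L: "is_mat n L" "is_mat n R" and XL: "mmult n (adj L) L = X"
    using fac unfolding gram_factorization_def by auto
  have LK: "mmult n L K = 0"
    unfolding K_def by (rule gram_factorization_projection(5)[OF fac])
  have K: "is_mat n K"
    unfolding K_def by (intro is_mat_diff is_mat_idm is_mat_mmult L)
  have "mmult n (G a) K k j = 0 \<and> mmult n L (mmult n (A a) K) k j = 0" for k j
  proof (cases "k < n")
    case True
    define v where "v = (\<lambda>i. K i j)"
    have "mvec n L v i = 0" for i
      unfolding v_def mvec_column LK by simp
    then have "quad_form n X v = 0"
      unfolding XL[symmetric] quad_form_gram by simp
    from fixed_point_quad_form_eq_0[OF psd fx this a]
    have "quad_form n (mmult n (adj (G a)) (G a)) v = 0" "quad_form n (mmult n (adj L) L) (mvec n (A a) v) = 0"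
      unfolding XL .
    then have "mvec n (G a) v k = 0" "mvec n L (mvec n (A a) v) k = 0"
      using True by (simp_all add: quad_form_gram_eq_0D)
    then show ?thesis
      unfolding v_def mvec_mvec mvec_column by (simp add: mmult_assoc)
  next
    case False
    have "is_mat n (mmult n (G a) K)" "is_mat n (mmult n L (mmult n (A a) K))"
      by (intro is_mat_mmult G A L(1) K)+
    then show ?thesis
      using False unfolding is_mat_def by blast
  qed
  then show "mmult n (G a) K = 0" "mmult n L (mmult n (A a) K) = 0"
    by (simp_all add: fun_eq_iff)
qed

lemma gram_sum_gauged:
  assumes N: "0 < N" and fac: "gram_factorization n X L R" and fx: "X = gram_sum n N G + channel n N A X"
  defines "P \<equiv> mmult n L R"
  shows "gram_sum n N (\<lambda>a. mmult n (G a) R)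
    + gram_sum n N (\<lambda>a. mmult n (mmult n L (A a)) R + (if a = 0 then idm n - P else 0)) = idm n"
proof -
  have L: "is_mat n L" "is_mat n R" and XL: "mmult n (adj L) L = X"
    using fac unfolding gram_factorization_def by auto
  note P = gram_factorization_projection[OF fac, folded P_def]
  have "gram_sum n N (\<lambda>a. mmult n (mmult n L (A a)) R + (if a = 0 then idm n - P else 0))
      = gram_sum n N (\<lambda>a. mmult n (mmult n L (A a)) R) + mmult n (adj (idm n - P)) (idm n - P)"
    using N P(4) by (intro gram_sum_add_orthogonal) (simp_all add: adj_mmult mmult_assoc)
  also have "gram_sum n N (\<lambda>a. mmult n (mmult n L (A a)) R) = mmult n (adj R) (mmult n (channel n N A X) R)"
    unfolding gram_sum_mmult_right XL[symmetric] channel_gram ..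
  also have "mmult n (adj (idm n - P)) (idm n - P) = idm n - P"
    using is_mat_mmult[OF L] unfolding P_def[symmetric]
    by (simp add: adj_diff P(1,2) mmult_diff_left mmult_diff_right mmult_idm_left mmult_idm_right is_mat_idm)
  finally have "gram_sum n N (\<lambda>a. mmult n (G a) R)
      + gram_sum n N (\<lambda>a. mmult n (mmult n L (A a)) R + (if a = 0 then idm n - P else 0))
      = mmult n (adj R) (mmult n X R) + (idm n - P)"
    using arg_cong[OF fx, of "\<lambda>Y. mmult n (adj R) (mmult n Y R)"]
    unfolding gram_sum_mmult_right by (simp only: mmult_add_left mmult_add_right add.assoc)
  also have "mmult n (adj R) (mmult n X R) = mmult n (adj P) P"
    unfolding XL[symmetric] P_def by (simp add: adj_mmult mmult_assoc)
  also have "mmult n (adj P) P + (idm n - P) = idm n"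
    unfolding P(1,2) by simp
  finally show ?thesis .
qed

text \<open>With \<open>X = L\<^sup>H L\<close> the fixed point equation turns into
  \<open>\<Sum> (G R)\<^sup>H (G R) + \<Sum> (L A R)\<^sup>H (L A R) = R\<^sup>H X R = P\<close>; the defect \<open>1 - P\<close> of the projection
  \<open>P = L R\<close> is absorbed into the component \<open>\<alpha> = 0\<close>, where it is invisible after multiplying
  by \<open>L\<close> from the right.\<close>

lemma left_canonical_gauge:
  assumes N: "0 < N" and A: "\<And>a. is_mat n (A a)" and G: "\<And>a. is_mat n (G a)"
    and X: "is_mat n X" "hermitian X" "psd n X" and fx: "X = gram_sum n N G + channel n N A X"
  shows "\<exists>L A' G'. (\<forall>a<N. mmult n (A' a) L = mmult n L (A a) \<and> mmult n (G' a) L = G a) \<and>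
     gram_sum n N G' + gram_sum n N A' = idm n \<and> (\<forall>a i. (\<forall>j. G a i j = 0) \<longrightarrow> (\<forall>j. G' a i j = 0))"
proof -
  obtain L R where fac: "gram_factorization n X L R"
    using psd_gram_factorization X by blast
  then have L: "is_mat n L"
    unfolding gram_factorization_def by auto
  define P where "P = mmult n L R"
  define K where "K = idm n - mmult n R L"
  define A' where "A' = (\<lambda>a. mmult n (mmult n L (A a)) R + (if a = 0 then idm n - P else 0))"
  define G' where "G' = (\<lambda>a. mmult n (G a) R)"
  have RL: "mmult n R L = idm n - K"
    unfolding K_def by simp
  note kernel = fixed_point_kernel[OF A G fac X(3) fx, folded K_def]
  have "mmult n (A' a) L = mmult n L (A a)" if "a < N" for a
  proof -
    have "mmult n (mmult n (mmult n L (A a)) R) L = mmult n L (A a)"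
      using kernel[OF that] mmult_idm_right[OF is_mat_mmult[OF L A]]
      by (simp add: mmult_assoc RL mmult_diff_right)
    then show ?thesis
      using gram_factorization_projection(3)[OF fac] unfolding A'_def mmult_add_left P_def by simp
  qed
  moreover have "mmult n (G' a) L = G a" if "a < N" for a
    using kernel[OF that] unfolding G'_def mmult_assoc RL mmult_diff_right mmult_idm_right[OF G] by simp
  moreover have "gram_sum n N G' + gram_sum n N A' = idm n"
    unfolding G'_def A'_def P_def by (rule gram_sum_gauged[OF N fac fx])
  moreover have "\<forall>a i. (\<forall>j. G a i j = 0) \<longrightarrow> (\<forall>j. G' a i j = 0)"
    unfolding G'_def mmult_def by simp
  ultimately show ?thesis
    by blast
qed

section \<open>Geometric decay from the spectrum of the transfer matrix\<close>

lemma pow_mat_smult: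
  fixes A :: "complex mat"
  assumes A: "A \<in> carrier_mat n n"
  shows "(k \<cdot>\<^sub>m A) ^\<^sub>m e = k ^ e \<cdot>\<^sub>m (A ^\<^sub>m e)"
proof (induction e)
  case 0
  show ?case using A by (auto intro!: eq_matI)
next
  case (Suc e)
  have Ae: "A ^\<^sub>m e \<in> carrier_mat n n"
    using A by simp
  have "(k \<cdot>\<^sub>m A) ^\<^sub>m Suc e = (k ^ e \<cdot>\<^sub>m A ^\<^sub>m e) * (k \<cdot>\<^sub>m A)"
    using Suc by simp
  also have "\<dots> = k ^ e \<cdot>\<^sub>m (A ^\<^sub>m e * (k \<cdot>\<^sub>m A))"
    using A by (intro mult_smult_assoc_mat[OF Ae, where nc = n]) simp
  also have "A ^\<^sub>m e * (k \<cdot>\<^sub>m A) = k \<cdot>\<^sub>m (A ^\<^sub>m e * A)"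
    by (rule mult_smult_distrib[OF Ae A])
  also have "k ^ e \<cdot>\<^sub>m (k \<cdot>\<^sub>m (A ^\<^sub>m e * A)) = (k ^ e * k) \<cdot>\<^sub>m (A ^\<^sub>m e * A)"
    by (rule eq_matI) (simp_all add: mult.assoc)
  also have "\<dots> = k ^ Suc e \<cdot>\<^sub>m A ^\<^sub>m Suc e"
    by (simp add: mult.commute)
  finally show ?case .
qed

lemma eigenvalue_smult_mat:
  fixes A :: "complex mat"
  assumes A: "A \<in> carrier_mat n n" and ev: "eigenvalue (k \<cdot>\<^sub>m A) \<nu>" and k: "k \<noteq> 0"
  shows "eigenvalue A (\<nu> / k)"
proof -
  obtain v where v: "v \<in> carrier_vec n" "v \<noteq> 0\<^sub>v n" "(k \<cdot>\<^sub>m A) *\<^sub>v v = \<nu> \<cdot>\<^sub>v v"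
    using ev A unfolding eigenvalue_def eigenvector_def by auto
  have "A *\<^sub>v v = (\<nu> / k) \<cdot>\<^sub>v v"
  proof (rule eq_vecI)
    fix i
    assume "i < dim_vec ((\<nu> / k) \<cdot>\<^sub>v v)"
    then have i: "i < n" using v(1) by simp
    have "((k \<cdot>\<^sub>m A) *\<^sub>v v) $ i = k * (A *\<^sub>v v) $ i"
      using A v(1) i by (simp add: scalar_prod_def sum_distrib_left mult.assoc)
    then show "(A *\<^sub>v v) $ i = ((\<nu> / k) \<cdot>\<^sub>v v) $ i"
      using v(3) i v(1) k by (simp add: field_simps)
  qed (use A v(1) in simp)
  then show ?thesis
    using v(1,2) A unfolding eigenvalue_def eigenvector_def by auto
qed

lemma spectral_radius_smult_less_1:
  fixes M :: "complex mat"
  assumes M: "M \<in> carrier_mat m m" and m: "0 < m" and s: "0 < s" "spectral_radius M < s"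
  shows "spectral_radius (complex_of_real (1 / s) \<cdot>\<^sub>m M) < 1"
proof -
  let ?B = "complex_of_real (1 / s) \<cdot>\<^sub>m M"
  have B: "?B \<in> carrier_mat m m"
    using M by simp
  have "cmod \<nu> < 1" if "eigenvalue ?B \<nu>" for \<nu>
  proof -
    have "eigenvalue M (\<nu> * s)"
      using eigenvalue_smult_mat[OF M that] s(1) by simp
    then have "cmod (\<nu> * s) \<le> spectral_radius M"
      using spectral_radius_mem_max(2)[OF M m] unfolding spectrum_def by blast
    then have "cmod \<nu> * s \<le> spectral_radius M"
      using s(1) by (simp add: norm_mult)
    then have "cmod \<nu> * s < 1 * s"
      using s(2) by simp
    then show ?thesis
      using s(1) by (simp only: mult_less_cancel_right_pos)
  qed
  then show ?thesis
    using spectral_radius_mem_max(1)[OF B m] unfolding spectrum_def by auto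
qed

lemma power_decay:
  fixes M :: "complex mat"
  assumes M: "M \<in> carrier_mat m m" and ev: "\<And>\<mu>. eigenvalue M \<mu> \<Longrightarrow> cmod \<mu> < 1"
  shows "\<exists>s c. 0 < s \<and> s < 1 \<and> (\<forall>k p q. p < m \<longrightarrow> q < m \<longrightarrow> cmod ((M ^\<^sub>m k) $$ (p, q)) \<le> c * s ^ k)"
proof (cases "m = 0")
  case True
  then show ?thesis by (intro exI[of _ "1/2"]) auto
next
  case False
  obtain \<mu> where "eigenvalue M \<mu>" "spectral_radius M = cmod \<mu>"
    using spectral_radius_mem_max(1)[OF M] False unfolding spectrum_def by auto
  then have r: "0 \<le> spectral_radius M" "spectral_radius M < 1"
    using ev by auto
  define s where "s = (1 + spectral_radius M) / 2"
  have s: "0 < s" "s < 1" "spectral_radius M < s"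
    using r unfolding s_def by auto
  define B where "B = complex_of_real (1 / s) \<cdot>\<^sub>m M"
  have B: "B \<in> carrier_mat m m"
    unfolding B_def using M by simp
  obtain c where c: "\<And>k. norm_bound (B ^\<^sub>m k) c"
    using spectral_radius_jnf_norm_bound_less_1_upper_triangular[OF B]
      spectral_radius_smult_less_1[OF M _ s(1,3)] False unfolding B_def by auto
  have "M = complex_of_real s \<cdot>\<^sub>m B"
    unfolding B_def using M s(1) by (auto intro!: eq_matI)
  then have Mk: "M ^\<^sub>m k = complex_of_real (s ^ k) \<cdot>\<^sub>m (B ^\<^sub>m k)" for k
    using pow_mat_smult[OF B] by simp
  have "cmod ((M ^\<^sub>m k) $$ (p, q)) \<le> c * s ^ k" if "p < m" "q < m" for k p q
  proof -
    have "cmod ((M ^\<^sub>m k) $$ (p, q)) = s ^ k * cmod ((B ^\<^sub>m k) $$ (p, q))"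
      using that B s(1) unfolding Mk by (simp add: norm_mult norm_power)
    also have "\<dots> \<le> s ^ k * c"
      using c[of k] that B s(1) unfolding norm_bound_def by (intro mult_left_mono) auto
    finally show ?thesis by (simp add: mult.commute)
  qed
  then show ?thesis
    using s(1,2) by blast
qed

definition transfer_mat :: "nat \<Rightarrow> (nat \<Rightarrow> cmat) \<Rightarrow> nat \<times> nat \<Rightarrow> nat \<times> nat \<Rightarrow> complex" where
  "transfer_mat N A = (\<lambda>(a, b) (c, d). \<Sum>\<alpha><N. cnj (A \<alpha> a c) * A \<alpha> b d)"

text \<open>The pair index \<open>(a, b) \<in> {..<n}\<^sup>2\<close> becomes the row/column index \<open>a * n + b\<close>.\<close>

definition pair_mat :: "nat \<Rightarrow> (nat \<times> nat \<Rightarrow> nat \<times> nat \<Rightarrow> complex) \<Rightarrow> complex mat" where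
  "pair_mat n T = mat (n * n) (n * n) (\<lambda>(p, q). T (p div n, p mod n) (q div n, q mod n))"

definition entry_norm :: "nat \<Rightarrow> cmat \<Rightarrow> real" where
  "entry_norm n Y = (\<Sum>c<n. \<Sum>d<n. cmod (Y c d))"

lemma pair_index_less:
  assumes "c < n" "d < n"
  shows "c * n + d < n * (n::nat)"
proof -
  have "c * n + d < Suc c * n"
    using assms by simp
  also have "Suc c * n \<le> n * n"
    using assms by (intro mult_le_mono1) simp
  finally show ?thesis .
qed

lemma pair_div_mod: "d < n \<Longrightarrow> (c * n + d) div n = c" "d < n \<Longrightarrow> (c * n + d) mod n = (d::nat)"
  by auto

lemma pair_eq_iff: "d < n \<Longrightarrow> j < n \<Longrightarrow> c * n + d = i * n + j \<longleftrightarrow> c = i \<and> d = (j::nat)"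
  by (metis pair_div_mod)

lemma pair_mat_carrier: "pair_mat n T \<in> carrier_mat (n * n) (n * n)"
  unfolding pair_mat_def by simp

lemma pair_mat_mult_index:
  assumes "B \<in> carrier_mat m (n * n)" "i < n" "j < n" "p < m"
  shows "(B * pair_mat n T) $$ (p, i * n + j) = (\<Sum>c<n. \<Sum>d<n. B $$ (p, c * n + d) * T (c, d) (i, j))"
  using assms pair_index_less[of i n j]
  by (simp add: scalar_prod_def atLeast0LessThan sum_pairs pair_index_less pair_div_mod pair_mat_def)

lemma channel_transfer: "channel n N A Y i j = (\<Sum>c<n. \<Sum>d<n. transfer_mat N A (c, d) (i, j) * Y c d)"
proof -
  have "channel n N A Y i j = (\<Sum>a<N. \<Sum>d<n. \<Sum>c<n. cnj (A a c i) * Y c d * A a d j)"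
    unfolding channel_def mmult_def adj_def by (simp add: sum_distrib_right)
  also have "\<dots> = (\<Sum>a<N. \<Sum>c<n. \<Sum>d<n. cnj (A a c i) * Y c d * A a d j)"
    by (rule sum.cong[OF refl], rule sum.swap)
  also have "\<dots> = (\<Sum>c<n. \<Sum>a<N. \<Sum>d<n. cnj (A a c i) * Y c d * A a d j)"
    by (rule sum.swap)
  also have "\<dots> = (\<Sum>c<n. \<Sum>d<n. \<Sum>a<N. cnj (A a c i) * Y c d * A a d j)"
    by (rule sum.cong[OF refl], rule sum.swap)
  also have "\<dots> = (\<Sum>c<n. \<Sum>d<n. transfer_mat N A (c, d) (i, j) * Y c d)"
    unfolding transfer_mat_def by (simp add: sum_distrib_left mult_ac)
  finally show ?thesis .
qed

lemma channel_power:
  assumes "i < n" "j < n"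
  shows "(channel n N A ^^ k) Y i j
    = (\<Sum>c<n. \<Sum>d<n. (pair_mat n (transfer_mat N A) ^\<^sub>m k) $$ (c * n + d, i * n + j) * Y c d)"
  using assms
proof (induction k arbitrary: i j)
  case 0
  have "(\<Sum>c<n. \<Sum>d<n. (pair_mat n (transfer_mat N A) ^\<^sub>m 0) $$ (c * n + d, i * n + j) * Y c d)
      = (\<Sum>c<n. if c = i then \<Sum>d<n. if d = j then Y c d else 0 else 0)"
    using 0 by (intro sum.cong refl)
      (auto simp: pair_mat_def pair_index_less pair_eq_iff if_distrib[where f = "\<lambda>x. x * _"] cong: if_cong)
  then show ?case
    using 0 by simp
next
  case (Suc k)
  let ?M = "pair_mat n (transfer_mat N A)"
  let ?T = "transfer_mat N A"
  have "(channel n N A ^^ Suc k) Y i j = (\<Sum>c<n. \<Sum>d<n. ?T (c, d) (i, j) * (channel n N A ^^ k) Y c d)"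
    by (simp add: channel_transfer)
  also have "\<dots> = (\<Sum>c<n. \<Sum>d<n. \<Sum>e<n. \<Sum>f<n. (?M ^\<^sub>m k) $$ (e * n + f, c * n + d) * ?T (c, d) (i, j) * Y e f)"
    by (intro sum.cong refl) (simp add: Suc.IH sum_distrib_left mult_ac)
  also have "\<dots> = (\<Sum>e<n. \<Sum>f<n. \<Sum>c<n. \<Sum>d<n. (?M ^\<^sub>m k) $$ (e * n + f, c * n + d) * ?T (c, d) (i, j) * Y e f)"
    by (rule sum_swap4)
  also have "\<dots> = (\<Sum>e<n. \<Sum>f<n. (?M ^\<^sub>m Suc k) $$ (e * n + f, i * n + j) * Y e f)"
  proof (intro sum.cong refl)
    fix e f
    assume "e \<in> {..<n}" "f \<in> {..<n}"
    then have "(?M ^\<^sub>m Suc k) $$ (e * n + f, i * n + j)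
        = (\<Sum>c<n. \<Sum>d<n. (?M ^\<^sub>m k) $$ (e * n + f, c * n + d) * ?T (c, d) (i, j))"
      unfolding pow_mat.simps(2) using Suc.prems pair_mat_carrier[of n ?T]
      by (intro pair_mat_mult_index) (auto simp: pair_index_less)
    then show "(\<Sum>c<n. \<Sum>d<n. (?M ^\<^sub>m k) $$ (e * n + f, c * n + d) * ?T (c, d) (i, j) * Y e f)
        = (?M ^\<^sub>m Suc k) $$ (e * n + f, i * n + j) * Y e f"
      by (simp add: sum_distrib_right)
  qed
  finally show ?case .
qed

lemma eigenvalue_pair_mat:
  assumes "eigenvalue (pair_mat n T) \<mu>"
  shows "is_eigenvalue ({..<n} \<times> {..<n}) T \<mu>"
proof -
  obtain v where v: "v \<in> carrier_vec (n * n)" "v \<noteq> 0\<^sub>v (n * n)" "pair_mat n T *\<^sub>v v = \<mu> \<cdot>\<^sub>v v"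
    using assms pair_mat_carrier[of n T] unfolding eigenvalue_def eigenvector_def by auto
  define u where "u = (\<lambda>(a, b). v $ (a * n + b))"
  obtain p where p: "p < n * n" "v $ p \<noteq> 0"
    using v(1,2) by (auto simp: vec_eq_iff)
  then have "0 < n"
    by (cases n) auto
  then have "(p div n, p mod n) \<in> {..<n} \<times> {..<n}" "u (p div n, p mod n) \<noteq> 0"
    using p by (auto simp: u_def less_mult_imp_div_less)
  moreover have "(\<Sum>y\<in>{..<n} \<times> {..<n}. T x y * u y) = \<mu> * u x" if x_mem: "x \<in> {..<n} \<times> {..<n}" for x
  proof -
    obtain a b where x: "x = (a, b)" "a < n" "b < n"
      using x_mem by (cases x) auto
    have "(\<Sum>y\<in>{..<n} \<times> {..<n}. T x y * u y) = (\<Sum>(c, d)\<in>{..<n} \<times> {..<n}. T (a, b) (c, d) * v $ (c * n + d))"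
      unfolding x(1) u_def by (rule sum.cong) auto
    also have "\<dots> = (\<Sum>c<n. \<Sum>d<n. T (a, b) (c, d) * v $ (c * n + d))"
      by (rule sum.cartesian_product[symmetric])
    also have "\<dots> = (pair_mat n T *\<^sub>v v) $ (a * n + b)"
      using v(1) x by (simp add: pair_mat_def pair_index_less scalar_prod_def atLeast0LessThan sum_pairs pair_div_mod)
    also have "\<dots> = \<mu> * u x"
      using v(1,3) x by (simp add: u_def pair_index_less)
    finally show ?thesis .
  qed
  ultimately show ?thesis
    unfolding is_eigenvalue_def by blast
qed

lemma entry_norm_idm: "entry_norm n (idm n) = real n"
proof -
  have "entry_norm n (idm n) = (\<Sum>c<n. \<Sum>d<n. if d = c then 1 else 0)"
    unfolding entry_norm_def idm_def by (intro sum.cong refl) auto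
  then show ?thesis by simp
qed

lemma channel_decay:
  assumes ev: "\<And>\<mu>. is_eigenvalue ({..<n} \<times> {..<n}) (transfer_mat N A) \<mu> \<Longrightarrow> cmod \<mu> < 1"
  shows "\<exists>s C. 0 < s \<and> s < 1 \<and>
    (\<forall>k Y i j. i < n \<longrightarrow> j < n \<longrightarrow> cmod ((channel n N A ^^ k) Y i j) \<le> C * entry_norm n Y * s ^ k)"
proof -
  let ?M = "pair_mat n (transfer_mat N A)"
  obtain s C where s: "0 < s" "s < 1"
    and C: "\<And>k p q. p < n * n \<Longrightarrow> q < n * n \<Longrightarrow> cmod ((?M ^\<^sub>m k) $$ (p, q)) \<le> C * s ^ k"
    using power_decay[OF pair_mat_carrier, of n "transfer_mat N A"] ev eigenvalue_pair_mat by blast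
  have "cmod ((channel n N A ^^ k) Y i j) \<le> C * entry_norm n Y * s ^ k" if ij: "i < n" "j < n" for k Y i j
  proof -
    have "cmod ((channel n N A ^^ k) Y i j)
        \<le> (\<Sum>c<n. \<Sum>d<n. cmod ((?M ^\<^sub>m k) $$ (c * n + d, i * n + j)) * cmod (Y c d))"
      unfolding channel_power[OF ij]
      by (rule order.trans[OF norm_sum sum_mono[OF order.trans[OF norm_sum]]]) (simp add: norm_mult)
    also have "\<dots> \<le> (\<Sum>c<n. \<Sum>d<n. C * s ^ k * cmod (Y c d))"
      using ij by (intro sum_mono mult_right_mono C pair_index_less) auto
    also have "\<dots> = C * entry_norm n Y * s ^ k"
      unfolding entry_norm_def by (simp add: sum_distrib_left mult_ac)
    finally show ?thesis .
  qed
  then show ?thesis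
    using s by blast
qed

section \<open>Neumann series of a decaying channel\<close>

locale decaying_channel =
  fixes n N :: nat and A :: "nat \<Rightarrow> cmat" and s C :: real
  assumes N_pos: "0 < N" and is_mat_A: "\<And>a. is_mat n (A a)" and s: "0 < s" "s < 1"
    and decay: "\<And>k Y i j. i < n \<Longrightarrow> j < n \<Longrightarrow>
      cmod ((channel n N A ^^ k) Y i j) \<le> C * entry_norm n Y * s ^ k"
begin

abbreviation "E \<equiv> channel n N A"

lemma summable_channel_power: "i < n \<Longrightarrow> j < n \<Longrightarrow> summable (\<lambda>k. (E ^^ k) Y i j)"
  by (rule summable_comparison_test'[where g = "\<lambda>k. C * entry_norm n Y * s ^ k" and N = 0])
    (use s decay in \<open>auto intro!: summable_mult summable_geometric\<close>)

definition neumann :: "cmat \<Rightarrow> cmat" where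
  "neumann Y = (\<lambda>i j. if i < n \<and> j < n then \<Sum>k. (E ^^ k) Y i j else 0)"

lemma is_mat_neumann: "is_mat n (neumann Y)"
  unfolding is_mat_def neumann_def by auto

lemma neumann_fixed_point:
  assumes "is_mat n Y"
  shows "neumann Y = Y + E (neumann Y)"
proof (intro ext)
  fix i j
  show "neumann Y i j = (Y + E (neumann Y)) i j"
  proof (cases "i < n \<and> j < n")
    case True
    have "E (neumann Y) i j = (\<Sum>c<n. \<Sum>d<n. transfer_mat N A (c, d) (i, j) * neumann Y c d)"
      by (rule channel_transfer)
    also have "\<dots> = (\<Sum>c<n. \<Sum>d<n. transfer_mat N A (c, d) (i, j) * suminf (\<lambda>k. (E ^^ k) Y c d))"
      by (intro sum.cong refl) (simp add: neumann_def)
    also have "\<dots> = suminf (\<lambda>k. \<Sum>c<n. \<Sum>d<n. transfer_mat N A (c, d) (i, j) * (E ^^ k) Y c d)"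
      by (rule suminf_double_sum) (rule summable_channel_power)
    also have "\<dots> = suminf (\<lambda>k. (E ^^ Suc k) Y i j)"
      using channel_transfer[of n N A "(E ^^ _) Y" i j] by simp
    also have "\<dots> = suminf (\<lambda>k. (E ^^ k) Y i j) - Y i j"
      using summable_channel_power[of i j Y] True by (subst suminf_split_head) auto
    finally show ?thesis
      using True by (simp add: neumann_def)
  next
    case False
    then show ?thesis
      using assms is_mat_channel[where N = N and Y = "neumann Y", OF is_mat_A] unfolding is_mat_def neumann_def by auto
  qed
qed

lemma hermitian_neumann:
  assumes "hermitian Y"
  shows "hermitian (neumann Y)"
proof -
  have "cnj (neumann Y j i) = neumann Y i j" for i j
  proof (cases "i < n \<and> j < n")
    case True
    have "(\<lambda>k. cnj ((E ^^ k) Y j i)) sums cnj (suminf (\<lambda>k. (E ^^ k) Y j i))"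
      using summable_channel_power[of j i Y] True by (subst sums_cnj) (auto intro: summable_sums)
    then have "cnj (suminf (\<lambda>k. (E ^^ k) Y j i)) = suminf (\<lambda>k. cnj ((E ^^ k) Y j i))"
      by (simp add: sums_iff)
    also have "\<dots> = suminf (\<lambda>k. (E ^^ k) Y i j)"
      using hermitian_cnj[OF hermitian_channel_power[OF assms]] by simp
    finally show ?thesis
      using True by (simp add: neumann_def)
  qed (auto simp: neumann_def)
  then show ?thesis
    unfolding hermitian_def adj_def by (auto intro!: ext)
qed

lemma psd_neumann:
  assumes "psd n Y"
  shows "psd n (neumann Y)"
  unfolding psd_def
proof
  fix v
  have "quad_form n (neumann Y) v = (\<Sum>a<n. \<Sum>b<n. (cnj (v a) * v b) * suminf (\<lambda>k. (E ^^ k) Y a b))"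
    unfolding quad_form_def by (intro sum.cong refl) (simp add: neumann_def mult_ac)
  also have "\<dots> = suminf (\<lambda>k. \<Sum>a<n. \<Sum>b<n. (cnj (v a) * v b) * (E ^^ k) Y a b)"
    by (rule suminf_double_sum) (rule summable_channel_power)
  also have "\<dots> = suminf (\<lambda>k. quad_form n ((E ^^ k) Y) v)"
    unfolding quad_form_def by (simp add: mult_ac)
  finally have eq: "quad_form n (neumann Y) v = suminf (\<lambda>k. quad_form n ((E ^^ k) Y) v)" .
  have "summable (\<lambda>k. \<Sum>a<n. \<Sum>b<n. (cnj (v a) * v b) * (E ^^ k) Y a b)"
    using summable_channel_power by (intro summable_sum summable_mult) auto
  then have "summable (\<lambda>k. quad_form n ((E ^^ k) Y) v)"
    unfolding quad_form_def by (simp add: mult_ac)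
  then show "0 \<le> quad_form n (neumann Y) v"
    unfolding eq using psd_channel_power[OF assms] unfolding psd_def by (intro suminf_nonneg_complex) auto
qed

text \<open>Keeping only the term \<open>\<alpha> = 0\<close> of the channel bounds \<open>(A\<^sub>0\<^sup>k)\<^sup>H A\<^sub>0\<^sup>k\<close> by
  \<open>E\<^sup>k(1)\<close>, so the entries of \<open>A\<^sub>0\<^sup>k\<close> decay at the square root of the rate of the channel.\<close>

lemma mat_pow_quad_form_le:
  "(\<Sum>i<n. cnj (mvec n (mat_pow n (A 0) k) v i) * mvec n (mat_pow n (A 0) k) v i)
     \<le> quad_form n ((E ^^ k) (idm n)) v"
proof (induction k arbitrary: v)
  case 0
  show ?case unfolding mat_pow_def by (simp add: quad_form_idm mvec_idm)
next
  case (Suc k)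
  have "(\<Sum>i<n. cnj (mvec n (mat_pow n (A 0) (Suc k)) v i) * mvec n (mat_pow n (A 0) (Suc k)) v i)
      = (\<Sum>i<n. cnj (mvec n (mat_pow n (A 0) k) (mvec n (A 0) v) i) * mvec n (mat_pow n (A 0) k) (mvec n (A 0) v) i)"
    by (simp add: mat_pow_def mvec_mvec)
  also have "\<dots> \<le> quad_form n ((E ^^ k) (idm n)) (mvec n (A 0) v)"
    by (rule Suc.IH)
  also have "\<dots> \<le> (\<Sum>a<N. quad_form n ((E ^^ k) (idm n)) (mvec n (A a) v))"
    using N_pos psd_channel_power[where N = N and A = A and k = k, OF psd_idm] unfolding psd_def
    by (intro member_le_sum[where i = 0 and f = "\<lambda>a. quad_form n ((E ^^ k) (idm n)) (mvec n (A a) v)"]) auto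
  also have "\<dots> = quad_form n ((E ^^ Suc k) (idm n)) v"
    by (simp add: quad_form_channel)
  finally show ?case .
qed

lemma mat_pow_bound:
  assumes ij: "i < n" "j < n"
  shows "cmod (mat_pow n (A 0) k i j) \<le> sqrt (C * n) * sqrt s ^ k"
proof -
  define v :: "nat \<Rightarrow> complex" where "v = (\<lambda>i. if i = j then 1 else 0)"
  have column: "mvec n (mat_pow n (A 0) k) v i' = mat_pow n (A 0) k i' j" for i'
    using ij(2) unfolding mvec_def v_def by (simp add: if_distrib[where f = "\<lambda>x. _ * x"] cong: if_cong)
  have "cnj (mat_pow n (A 0) k i j) * mat_pow n (A 0) k i j
      \<le> (\<Sum>i<n. cnj (mvec n (mat_pow n (A 0) k) v i) * mvec n (mat_pow n (A 0) k) v i)"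
    unfolding column using ij by (intro member_le_sum) (auto intro: cnj_mult_self_nonneg)
  also have "\<dots> \<le> (E ^^ k) (idm n) j j"
    using mat_pow_quad_form_le[of k v] ij(2) unfolding v_def quad_form_unit by simp
  finally have "Re (cnj (mat_pow n (A 0) k i j) * mat_pow n (A 0) k i j) \<le> Re ((E ^^ k) (idm n) j j)"
    by (simp add: less_eq_complex_def)
  also have "\<dots> \<le> C * n * s ^ k"
    using order.trans[OF complex_Re_le_cmod decay[OF ij(2) ij(2), of k "idm n"]] by (simp add: entry_norm_idm)
  finally have "(cmod (mat_pow n (A 0) k i j))\<^sup>2 \<le> C * n * s ^ k"
    using cmod_power2[of "mat_pow n (A 0) k i j"] by (simp add: power2_eq_square)
  then have "cmod (mat_pow n (A 0) k i j) \<le> sqrt (C * n * s ^ k)"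
    using real_le_rsqrt by blast
  then show ?thesis
    by (simp add: real_sqrt_mult real_sqrt_power)
qed

lemma left_solve_one_minus_A0: "\<exists>t. \<forall>j<n. t j - (\<Sum>i<n. t i * A 0 i j) = (c0 j :: complex)"
proof -
  define t where "t = (\<lambda>j. suminf (\<lambda>k. \<Sum>l<n. c0 l * mat_pow n (A 0) k l j))"
  have summ: "summable (\<lambda>k. \<Sum>l<n. c0 l * mat_pow n (A 0) k l j)" if j: "j < n" for j
  proof (rule summable_comparison_test'[where g = "\<lambda>k. (\<Sum>l<n. cmod (c0 l) * sqrt (C * n)) * sqrt s ^ k" and N = 0])
    show "summable (\<lambda>k. (\<Sum>l<n. cmod (c0 l) * sqrt (C * n)) * sqrt s ^ k)"
      using s by (intro summable_mult summable_geometric) auto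
    fix k
    have "cmod (\<Sum>l<n. c0 l * mat_pow n (A 0) k l j) \<le> (\<Sum>l<n. cmod (c0 l) * (sqrt (C * n) * sqrt s ^ k))"
      by (rule order.trans[OF norm_sum]) (auto intro!: sum_mono mult_left_mono mat_pow_bound j simp: norm_mult)
    then show "cmod (\<Sum>l<n. c0 l * mat_pow n (A 0) k l j) \<le> (\<Sum>l<n. cmod (c0 l) * sqrt (C * n)) * sqrt s ^ k"
      by (simp add: sum_distrib_right sum_distrib_left mult_ac)
  qed
  have "t j - (\<Sum>i<n. t i * A 0 i j) = c0 j" if j: "j < n" for j
  proof -
    have "(\<Sum>i<n. t i * A 0 i j) = (\<Sum>i<n. suminf (\<lambda>k. (\<Sum>l<n. c0 l * mat_pow n (A 0) k l i) * A 0 i j))"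
      unfolding t_def using summ by (intro sum.cong refl suminf_mult2) auto
    also have "\<dots> = suminf (\<lambda>k. \<Sum>i<n. (\<Sum>l<n. c0 l * mat_pow n (A 0) k l i) * A 0 i j)"
      using summ by (intro suminf_sum[symmetric] summable_mult2) auto
    also have "\<dots> = suminf (\<lambda>k. \<Sum>l<n. c0 l * mat_pow n (A 0) (Suc k) l j)"
    proof (intro arg_cong[where f = suminf] ext)
      fix k
      have "(\<Sum>i<n. (\<Sum>l<n. c0 l * mat_pow n (A 0) k l i) * A 0 i j)
          = (\<Sum>i<n. \<Sum>l<n. c0 l * (mat_pow n (A 0) k l i * A 0 i j))"
        by (simp add: sum_distrib_right mult.assoc)
      also have "\<dots> = (\<Sum>l<n. \<Sum>i<n. c0 l * (mat_pow n (A 0) k l i * A 0 i j))"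
        by (rule sum.swap)
      also have "\<dots> = (\<Sum>l<n. c0 l * mat_pow n (A 0) (Suc k) l j)"
        by (simp add: mat_pow_def mmult_def sum_distrib_left)
      finally show "(\<Sum>i<n. (\<Sum>l<n. c0 l * mat_pow n (A 0) k l i) * A 0 i j)
          = (\<Sum>l<n. c0 l * mat_pow n (A 0) (Suc k) l j)" .
    qed
    also have "\<dots> = t j - (\<Sum>l<n. c0 l * mat_pow n (A 0) 0 l j)"
      unfolding t_def using summ[OF j] by (rule suminf_split_head)
    also have "(\<Sum>l<n. c0 l * mat_pow n (A 0) 0 l j) = c0 j"
      using j by (simp add: mat_pow_def idm_def if_distrib[where f = "\<lambda>x. _ * x"] cong: if_cong)
    finally show ?thesis by simp
  qed
  then show ?thesis by blast
qed

lemma left_canonical_components: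
  "\<exists>t L A' c'.
     (\<forall>a<N. \<forall>j<n. vmat n (c' a) L j = c a j + vmat n t (A a) j - (if a = 0 then t j else 0)) \<and>
     (\<forall>a<N. mmult n (A' a) L = mmult n L (A a)) \<and>
     (\<forall>j<n. c' 0 j = 0) \<and>
     (\<forall>j<n. \<forall>k<n. (\<Sum>a<N. cnj (c' a j) * c' a k) + gram_sum n N A' j k = (if j = k then 1 else 0))"
proof -
  obtain t where t: "\<forall>j<n. t j - (\<Sum>i<n. t i * A 0 i j) = c 0 j"
    using left_solve_one_minus_A0 by blast
  define ct where "ct = (\<lambda>a j. if j < n then c a j + vmat n t (A a) j - (if a = 0 then t j else 0) else 0)"
  \<comment> \<open>The choice of \<open>t\<close> removes the identity component of the gauged first row.\<close>
  have ct0: "ct 0 j = 0" for j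
  proof (cases "j < n")
    case True
    then have "c 0 j = t j - (\<Sum>i<n. t i * A 0 i j)"
      using t by simp
    then show ?thesis
      using True by (simp add: ct_def vmat_def)
  qed (simp add: ct_def)
  \<comment> \<open>The first row of the regular form, modified by the gauge vector \<open>t\<close>, as single-row matrices.\<close>
  define G :: "nat \<Rightarrow> cmat" where "G = (\<lambda>a i j. if i = 0 then ct a j else 0)"
  have G: "is_mat n (G a)" for a
    unfolding is_mat_def G_def ct_def by auto
  have fx: "neumann (gram_sum n N G) = gram_sum n N G + E (neumann (gram_sum n N G))"
    by (rule neumann_fixed_point[OF is_mat_gram_sum[OF G]])
  obtain L A' G' where intertwine: "\<forall>a<N. mmult n (A' a) L = mmult n L (A a) \<and> mmult n (G' a) L = G a"
    and unital: "gram_sum n N G' + gram_sum n N A' = idm n"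
    and rows: "\<forall>a i. (\<forall>j. G a i j = 0) \<longrightarrow> (\<forall>j. G' a i j = 0)"
    using left_canonical_gauge[OF N_pos is_mat_A G is_mat_neumann hermitian_neumann[OF hermitian_gram_sum]
        psd_neumann[OF psd_gram_sum] fx] by blast
  define c' where "c' = (\<lambda>a k. G' a 0 k)"
  have G'_rows: "G' a i j = 0" if "i \<noteq> 0" for a i j
    using rows that unfolding G_def by auto
  have "vmat n (c' a) L j = c a j + vmat n t (A a) j - (if a = 0 then t j else 0)" if "a < N" "j < n" for a j
    using intertwine that fun_cong[OF fun_cong[OF conjunct2[OF intertwine[rule_format, OF that(1)]]], of 0 j]
    unfolding c'_def mmult_def by (simp add: G_def ct_def vmat_def)
  moreover have "c' 0 j = 0" for j
    using rows ct0 unfolding c'_def G_def by auto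
  moreover have "(\<Sum>a<N. cnj (c' a j) * c' a k) + gram_sum n N A' j k = (if j = k then 1 else 0)"
    if "j < n" "k < n" for j k
    using fun_cong[OF fun_cong[OF unital], of j k] gram_sum_single_row[of G' n N j k] G'_rows that
    unfolding c'_def idm_def by auto
  ultimately show ?thesis
    using intertwine by blast
qed

end

section \<open>Block triangular and operator-valued matrices\<close>

text \<open>The \<open>(n + 2) \<times> (n + 2)\<close> matrix \<open>[[x, c, d], [0, M, b], [0, 0, y]]\<close> with blocks of sizes
  \<open>1, n, 1\<close>.\<close>

definition block_ut :: "nat \<Rightarrow> complex \<Rightarrow> (nat \<Rightarrow> complex) \<Rightarrow> complex \<Rightarrow> cmat \<Rightarrow> (nat \<Rightarrow> complex) \<Rightarrow> complex \<Rightarrow> cmat"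
  where "block_ut n x c d M b y = (\<lambda>i j.
     if i = 0 then (if j = 0 then x else if j \<le> n then c (j - 1) else if j = Suc n then d else 0)
     else if i \<le> n then (if j = 0 then 0 else if j \<le> n then M (i - 1) (j - 1) else if j = Suc n then b (i - 1) else 0)
     else if i = Suc n \<and> j = Suc n then y else 0)"

lemma block_ut_simps:
  "block_ut n x c d M b y 0 0 = x" "block_ut n x c d M b y (Suc n) (Suc n) = y"
  "0 < i \<Longrightarrow> block_ut n x c d M b y i 0 = 0" "j \<le> n \<Longrightarrow> block_ut n x c d M b y (Suc n) j = 0"
  "j < n \<Longrightarrow> block_ut n x c d M b y 0 (Suc j) = c j"
  "i < n \<Longrightarrow> j < n \<Longrightarrow> block_ut n x c d M b y (Suc i) (Suc j) = M i j"
  unfolding block_ut_def by auto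

lemma block_ut_cong:
  assumes "\<And>j. j < n \<Longrightarrow> c j = c' j" "\<And>i j. i < n \<Longrightarrow> j < n \<Longrightarrow> M i j = M' i j"
    "\<And>i. i < n \<Longrightarrow> b i = b' i" "x = x'" "d = d'" "y = y'"
  shows "block_ut n x c d M b y i j = block_ut n x' c' d' M' b' y' i j"
  using assms unfolding block_ut_def by auto

lemma block_ut_mult:
  assumes "i < n + 2" "j < n + 2"
  shows "(\<Sum>k<n + 2. block_ut n x c d M b y i k * block_ut n x' c' d' M' b' y' k j)
    = block_ut n (x * x') (\<lambda>j. x * c' j + vmat n c M' j) (x * d' + (\<Sum>k<n. c k * b' k) + d * y')
        (mmult n M M') (\<lambda>i. mvec n M b' i + b i * y') (y * y') i j"
  using assms unfolding sum_lessThan_plus2_shift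
  by (cases i; cases j) (auto simp: block_ut_def vmat_def mvec_def mmult_def less_Suc_eq)

definition op_lincomb :: "(nat \<Rightarrow> 'q::finite op) \<Rightarrow> (nat \<Rightarrow> complex) \<Rightarrow> 'q op" where
  "op_lincomb Ob f = (\<lambda>i j. \<Sum>\<alpha><card (UNIV :: 'q set)^2. f \<alpha> * Ob \<alpha> i j)"

lemma op_inner_sum_right:
  "op_inner (X :: 'q::finite op) (\<lambda>i j. \<Sum>\<alpha><M. f \<alpha> * B \<alpha> i j) = (\<Sum>\<alpha><(M::nat). f \<alpha> * op_inner X (B \<alpha>))"
proof -
  have "op_trace_adj X (\<lambda>i j. \<Sum>\<alpha><M. f \<alpha> * B \<alpha> i j)
      = (\<Sum>i\<in>UNIV. \<Sum>j\<in>UNIV. \<Sum>\<alpha><M. f \<alpha> * (cnj (X j i) * B \<alpha> j i))"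
    unfolding op_trace_adj_def by (simp add: sum_distrib_left mult_ac)
  also have "\<dots> = (\<Sum>\<alpha><M. f \<alpha> * op_trace_adj X (B \<alpha>))"
    unfolding op_trace_adj_def sum_distrib_left
    by (subst sum.swap, rule sum.cong[OF refl], subst sum.swap, rule refl)
  finally show ?thesis
    unfolding op_inner_def by (simp add: sum_divide_distrib)
qed

lemma op_inner_sum_left:
  "op_inner (\<lambda>i j. \<Sum>\<alpha><M. f \<alpha> * B \<alpha> i j) (Y :: 'q::finite op) = (\<Sum>\<alpha><(M::nat). cnj (f \<alpha>) * op_inner (B \<alpha>) Y)"
proof -
  have "op_trace_adj (\<lambda>i j. \<Sum>\<alpha><M. f \<alpha> * B \<alpha> i j) Y
      = (\<Sum>i\<in>UNIV. \<Sum>j\<in>UNIV. \<Sum>\<alpha><M. cnj (f \<alpha>) * (cnj (B \<alpha> j i) * Y j i))"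
    unfolding op_trace_adj_def by (simp add: sum_distrib_left sum_distrib_right mult_ac)
  also have "\<dots> = (\<Sum>\<alpha><M. cnj (f \<alpha>) * op_trace_adj (B \<alpha>) Y)"
    unfolding op_trace_adj_def sum_distrib_left
    by (subst sum.swap, rule sum.cong[OF refl], subst sum.swap, rule refl)
  finally show ?thesis
    unfolding op_inner_def by (simp add: sum_divide_distrib)
qed

context
  fixes Ob :: "nat \<Rightarrow> 'q::finite op"
  assumes onb: "op_onb Ob"
begin

lemma op_inner_basis_lincomb:
  assumes "\<beta> < card (UNIV :: 'q set)^2"
  shows "op_inner (Ob \<beta>) (op_lincomb Ob f) = f \<beta>"
proof -
  have "op_inner (Ob \<beta>) (op_lincomb Ob f) = (\<Sum>\<alpha><card (UNIV :: 'q set)^2. if \<alpha> = \<beta> then f \<beta> else 0)"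
    unfolding op_lincomb_def op_inner_sum_right using onb assms
    by (intro sum.cong refl) (auto simp: op_onb_def)
  then show ?thesis
    using assms by simp
qed

lemma op_inner_lincomb: "op_inner (op_lincomb Ob f) (op_lincomb Ob g) = (\<Sum>\<alpha><card (UNIV :: 'q set)^2. cnj (f \<alpha>) * g \<alpha>)"
  unfolding op_lincomb_def[of Ob f] op_inner_sum_left by (simp add: op_inner_basis_lincomb)

lemma op_lincomb_expansion: "op_lincomb Ob (\<lambda>\<alpha>. op_inner (Ob \<alpha>) X) = X"
  using onb unfolding op_onb_def op_lincomb_def by (intro ext) metis

lemma op_lincomb_unit: "op_lincomb Ob (\<lambda>\<alpha>. if \<alpha> = 0 then 1 else 0) = op_id"
  using onb unfolding op_onb_def op_lincomb_def
  by (intro ext) (simp add: if_distrib[where f = "\<lambda>x. x * _"] cong: if_cong)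

lemma op_inner_basis_id:
  assumes "\<alpha> < card (UNIV :: 'q set)^2"
  shows "op_inner (Ob \<alpha>) op_id = (if \<alpha> = 0 then 1 else 0)"
  using op_inner_basis_lincomb[OF assms, of "\<lambda>\<alpha>. if \<alpha> = 0 then 1 else 0"] by (simp add: op_lincomb_unit)

end

lemma op_lincomb_zero: "op_lincomb Ob (\<lambda>_. 0) = op_zero"
  unfolding op_lincomb_def op_zero_def by simp

lemma op_inner_zero: "op_inner X op_zero = 0"
  unfolding op_inner_def op_trace_adj_def op_zero_def by simp

lemma opmat_times_mat_lincomb:
  "opmat_times_mat m (\<lambda>a b. op_lincomb Ob (\<lambda>\<alpha>. F \<alpha> a b)) L a b = op_lincomb Ob (\<lambda>\<alpha>. \<Sum>c<m. F \<alpha> a c * L c b)"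
proof (intro ext)
  fix i j
  let ?N = "card (UNIV :: 'a set)^2"
  have "(\<Sum>c<m. (\<Sum>\<alpha><?N. F \<alpha> a c * Ob \<alpha> i j) * L c b) = (\<Sum>c<m. \<Sum>\<alpha><?N. F \<alpha> a c * L c b * Ob \<alpha> i j)"
    by (simp add: sum_distrib_left sum_distrib_right mult_ac)
  also have "\<dots> = (\<Sum>\<alpha><?N. (\<Sum>c<m. F \<alpha> a c * L c b) * Ob \<alpha> i j)"
    by (subst sum.swap) (simp add: sum_distrib_right)
  finally show "opmat_times_mat m (\<lambda>a b. op_lincomb Ob (\<lambda>\<alpha>. F \<alpha> a b)) L a b i j
      = op_lincomb Ob (\<lambda>\<alpha>. \<Sum>c<m. F \<alpha> a c * L c b) i j"
    unfolding opmat_times_mat_def op_lincomb_def .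
qed

lemma mat_times_opmat_lincomb:
  "mat_times_opmat m L (\<lambda>a b. op_lincomb Ob (\<lambda>\<alpha>. F \<alpha> a b)) a b = op_lincomb Ob (\<lambda>\<alpha>. \<Sum>c<m. L a c * F \<alpha> c b)"
  unfolding mat_times_opmat_def op_lincomb_def
  by (auto intro!: ext simp: sum_distrib_left sum_distrib_right mult_ac intro: sum.swap)

lemma regular_form_comp_block:
  fixes Ob :: "nat \<Rightarrow> 'q::finite op"
  assumes onb: "op_onb Ob" and rf: "regular_form n W" and \<alpha>: "\<alpha> < card (UNIV :: 'q set)^2"
    and ab: "a < n + 2" "b < n + 2"
  shows "comp Ob W \<alpha> a b = block_ut n (if \<alpha> = 0 then 1 else 0) (\<lambda>j. comp Ob W \<alpha> 0 (Suc j)) (comp Ob W \<alpha> 0 (Suc n))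
    (restrict_mat n (comp Ob (A_block W) \<alpha>)) (\<lambda>i. comp Ob W \<alpha> (Suc i) (Suc n)) (if \<alpha> = 0 then 1 else 0) a b"
  using rf ab op_inner_basis_id[OF onb \<alpha>]
  unfolding regular_form_def block_ut_def restrict_mat_def comp_def A_block_def
  by (cases a; cases b) (auto simp: op_inner_zero less_Suc_eq)

lemma regular_form_lincomb_block:
  fixes Ob :: "nat \<Rightarrow> 'q::finite op"
  assumes "op_onb Ob"
  shows "regular_form n (\<lambda>a b. op_lincomb Ob (\<lambda>\<alpha>.
    block_ut n (if \<alpha> = 0 then 1 else 0) (c \<alpha>) (d \<alpha>) (M \<alpha>) (v \<alpha>) (if \<alpha> = 0 then 1 else 0) a b))"
  unfolding regular_form_def
  using op_lincomb_unit[OF assms] op_lincomb_zero[of Ob] by (auto simp: block_ut_simps)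

lemma left_canonical_lincomb_block:
  fixes Ob :: "nat \<Rightarrow> 'q::finite op"
  defines "N \<equiv> card (UNIV :: 'q set)^2"
  assumes onb: "op_onb Ob" and c0: "\<forall>j<n. c 0 j = 0"
    and orth: "\<forall>j<n. \<forall>k<n. (\<Sum>\<alpha><N. cnj (c \<alpha> j) * c \<alpha> k) + gram_sum n N M j k = (if j = k then 1 else 0)"
  shows "left_canonical n (\<lambda>a b. op_lincomb Ob (\<lambda>\<alpha>.
    block_ut n (if \<alpha> = 0 then 1 else 0) (c \<alpha>) (d \<alpha>) (M \<alpha>) (v \<alpha>) (y \<alpha>) a b))"
  unfolding left_canonical_def
proof (intro allI impI)
  fix b b' :: nat
  assume b: "b \<le> n" and b': "b' \<le> n"
  let ?B = "\<lambda>\<alpha>. block_ut n (if \<alpha> = 0 then 1 else 0) (c \<alpha>) (d \<alpha>) (M \<alpha>) (v \<alpha>) (y \<alpha>)"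
  have N: "0 < N"
    unfolding N_def by (simp add: card_gt_0_iff)
  have "(\<Sum>a\<le>n. op_inner (op_lincomb Ob (\<lambda>\<alpha>. ?B \<alpha> a b)) (op_lincomb Ob (\<lambda>\<alpha>. ?B \<alpha> a b')))
      = (\<Sum>a\<le>n. \<Sum>\<alpha><N. cnj (?B \<alpha> a b) * ?B \<alpha> a b')"
    unfolding op_inner_lincomb[OF onb] N_def ..
  also have "\<dots> = (\<Sum>\<alpha><N. cnj (?B \<alpha> 0 b) * ?B \<alpha> 0 b') + (\<Sum>\<alpha><N. \<Sum>i<n. cnj (?B \<alpha> (Suc i) b) * ?B \<alpha> (Suc i) b')"
    unfolding sum_atMost_shift by (subst sum.swap) (rule refl)
  also have "\<dots> = (if b = b' then 1 else 0)"
  proof (cases b; cases b')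
    fix j k
    assume jk: "b = Suc j" "b' = Suc k"
    then have "j < n" "k < n"
      using b b' by auto
    then have "(\<Sum>\<alpha><N. \<Sum>i<n. cnj (?B \<alpha> (Suc i) b) * ?B \<alpha> (Suc i) b') = gram_sum n N M j k"
      unfolding jk gram_sum_def mmult_def adj_def by (intro sum.cong refl) (simp add: block_ut_def)
    then show ?thesis
      using orth \<open>j < n\<close> \<open>k < n\<close> jk by (simp add: block_ut_def)
  qed (use N c0 b b' in \<open>auto simp: block_ut_def if_distrib[where f = "\<lambda>x. x * _"] if_distrib[where f = cnj] cong: if_cong\<close>)
  finally show "(\<Sum>a\<le>n. op_inner (op_lincomb Ob (\<lambda>\<alpha>. ?B \<alpha> a b)) (op_lincomb Ob (\<lambda>\<alpha>. ?B \<alpha> a b')))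
      = (if b = b' then 1 else 0)" .
qed

lemma is_eigenvalue_cong:
  assumes "\<And>x y. x \<in> I \<Longrightarrow> y \<in> I \<Longrightarrow> M x y = M' x y"
  shows "is_eigenvalue I M \<mu> \<longleftrightarrow> is_eigenvalue I M' \<mu>"
  unfolding is_eigenvalue_def using assms by simp

lemma transfer_restrict_eigenvalue:
  assumes "is_eigenvalue ({..<n} \<times> {..<n}) (transfer_mat (card (UNIV :: 'q set)^2) (\<lambda>\<alpha>. restrict_mat n (comp Ob W \<alpha>))) \<mu>"
  shows "is_eigenvalue ({..<n} \<times> {..<n}) (transfer (Ob :: nat \<Rightarrow> 'q::finite op) W) \<mu>"
  using assms by (subst is_eigenvalue_cong) (auto simp: transfer_mat_def transfer_def restrict_mat_def)

section \<open>The left canonical form\<close>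

lemma first_degree_decaying_channel:
  fixes Ob :: "nat \<Rightarrow> 'q::finite op"
  assumes "first_degree Ob n W"
  obtains s C where "decaying_channel n (card (UNIV :: 'q set)^2) (\<lambda>\<alpha>. restrict_mat n (comp Ob (A_block W) \<alpha>)) s C"
proof -
  let ?A = "\<lambda>\<alpha>. restrict_mat n (comp Ob (A_block W) \<alpha>)"
  have "cmod \<mu> < 1" if "is_eigenvalue ({..<n} \<times> {..<n}) (transfer_mat (card (UNIV :: 'q set)^2) ?A) \<mu>" for \<mu>
    using assms transfer_restrict_eigenvalue[OF that] unfolding first_degree_def by blast
  then obtain s C where "0 < s" "s < 1" and "\<forall>k Y i j. i < n \<longrightarrow> j < n \<longrightarrow>
      cmod ((channel n (card (UNIV :: 'q set)^2) ?A ^^ k) Y i j) \<le> C * entry_norm n Y * s ^ k"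
    using channel_decay by blast
  then show ?thesis
    by (intro that) (unfold_locales, auto simp: is_mat_restrict_mat card_gt_0_iff)
qed

definition gauge_mat :: "nat \<Rightarrow> (nat \<Rightarrow> complex) \<Rightarrow> cmat \<Rightarrow> cmat" where
  "gauge_mat n t L = block_ut n 1 t 0 L (\<lambda>_. 0) 1"

text \<open>The last column is forced by \<open>W\<^sub>L L = L W\<close>, since the last column of \<open>gauge_mat n t L\<close> is
  the last unit vector.\<close>

definition gauged_comps ::
  "(nat \<Rightarrow> 'q::finite op) \<Rightarrow> nat \<Rightarrow> (nat \<Rightarrow> nat \<Rightarrow> 'q op) \<Rightarrow> (nat \<Rightarrow> complex) \<Rightarrow> cmat \<Rightarrow>
     (nat \<Rightarrow> nat \<Rightarrow> complex) \<Rightarrow> (nat \<Rightarrow> cmat) \<Rightarrow> nat \<Rightarrow> cmat" where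
  "gauged_comps Ob n W t L c' A' \<alpha> = block_ut n (if \<alpha> = 0 then 1 else 0) (c' \<alpha>)
     (comp Ob W \<alpha> 0 (Suc n) + (\<Sum>k<n. t k * comp Ob W \<alpha> (Suc k) (Suc n)))
     (A' \<alpha>) (mvec n L (\<lambda>i. comp Ob W \<alpha> (Suc i) (Suc n))) (if \<alpha> = 0 then 1 else 0)"

lemma gauged_comps_intertwine:
  fixes Ob :: "nat \<Rightarrow> 'q::finite op"
  assumes onb: "op_onb Ob" and rf: "regular_form n W" and \<alpha>: "\<alpha> < card (UNIV :: 'q set)^2"
    and row: "\<forall>j<n. vmat n (c' \<alpha>) L j
      = comp Ob W \<alpha> 0 (Suc j) + vmat n t (restrict_mat n (comp Ob (A_block W) \<alpha>)) j - (if \<alpha> = 0 then t j else 0)"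
    and block: "mmult n (A' \<alpha>) L = mmult n L (restrict_mat n (comp Ob (A_block W) \<alpha>))"
    and ab: "a < n + 2" "b < n + 2"
  shows "(\<Sum>c<n + 2. gauged_comps Ob n W t L c' A' \<alpha> a c * gauge_mat n t L c b)
    = (\<Sum>c<n + 2. gauge_mat n t L a c * comp Ob W \<alpha> c b)"
proof -
  have "(\<Sum>c<n + 2. gauge_mat n t L a c * comp Ob W \<alpha> c b) = (\<Sum>c<n + 2. gauge_mat n t L a c *
      block_ut n (if \<alpha> = 0 then 1 else 0) (\<lambda>j. comp Ob W \<alpha> 0 (Suc j)) (comp Ob W \<alpha> 0 (Suc n))
        (restrict_mat n (comp Ob (A_block W) \<alpha>)) (\<lambda>i. comp Ob W \<alpha> (Suc i) (Suc n)) (if \<alpha> = 0 then 1 else 0) c b)"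
    using regular_form_comp_block[OF onb rf \<alpha> _ ab(2)] by (intro sum.cong refl) simp
  also have "\<dots> = (\<Sum>c<n + 2. gauged_comps Ob n W t L c' A' \<alpha> a c * gauge_mat n t L c b)"
    unfolding gauged_comps_def gauge_mat_def block_ut_mult[OF ab] using row block
    by (intro block_ut_cong) (auto simp: mvec_def)
  finally show ?thesis
    by (rule sym)
qed

lemma intertwine_lincomb:
  fixes Ob :: "nat \<Rightarrow> 'q::finite op"
  assumes "op_onb Ob" and "\<And>\<alpha>. \<alpha> < card (UNIV :: 'q set)^2 \<Longrightarrow>
      (\<Sum>c<m. WLc \<alpha> a c * L c b) = (\<Sum>c<m. L a c * comp Ob W \<alpha> c b)"
  shows "opmat_times_mat m (\<lambda>a b. op_lincomb Ob (\<lambda>\<alpha>. WLc \<alpha> a b)) L a b = mat_times_opmat m L W a b"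
proof -
  have "opmat_times_mat m (\<lambda>a b. op_lincomb Ob (\<lambda>\<alpha>. WLc \<alpha> a b)) L a b
      = op_lincomb Ob (\<lambda>\<alpha>. \<Sum>c<m. WLc \<alpha> a c * L c b)"
    by (rule opmat_times_mat_lincomb)
  also have "\<dots> = op_lincomb Ob (\<lambda>\<alpha>. \<Sum>c<m. L a c * comp Ob W \<alpha> c b)"
    unfolding op_lincomb_def using assms(2) by (intro ext sum.cong refl) simp
  also have "\<dots> = mat_times_opmat m L W a b"
    using mat_times_opmat_lincomb[of m L Ob "comp Ob W" a b] op_lincomb_expansion[OF assms(1)]
    unfolding comp_def by simp
  finally show ?thesis .
qed

theorem proposition3:
  fixes Ob :: "nat \<Rightarrow> 'q::finite op"
    and \<chi> :: nat
    and W :: "nat \<Rightarrow> nat \<Rightarrow> 'q op"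
  assumes "op_onb Ob"
    and "first_degree Ob \<chi> W"
  shows "\<exists>(\<chi>'::nat) (WL :: nat \<Rightarrow> nat \<Rightarrow> 'q op) (L :: nat \<Rightarrow> nat \<Rightarrow> complex).
           regular_form \<chi>' WL \<and> L_block_form \<chi>' \<chi> L \<and>
           (\<forall>a < \<chi>'+2. \<forall>b < \<chi>+2.
              opmat_times_mat (\<chi>'+2) WL L a b = mat_times_opmat (\<chi>+2) L W a b) \<and>
           left_canonical \<chi>' WL"
proof -
  have rf: "regular_form \<chi> W"
    using assms(2) unfolding first_degree_def by blast
  obtain s C where "decaying_channel \<chi> (card (UNIV :: 'q set)^2) (\<lambda>\<alpha>. restrict_mat \<chi> (comp Ob (A_block W) \<alpha>)) s C"
    using first_degree_decaying_channel[OF assms(2)] .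
  from decaying_channel.left_canonical_components[OF this, of "\<lambda>\<alpha> j. comp Ob W \<alpha> 0 (Suc j)"]
  obtain t L A' c' where row: "\<forall>\<alpha><card (UNIV :: 'q set)^2. \<forall>j<\<chi>. vmat \<chi> (c' \<alpha>) L j
      = comp Ob W \<alpha> 0 (Suc j) + vmat \<chi> t (restrict_mat \<chi> (comp Ob (A_block W) \<alpha>)) j - (if \<alpha> = 0 then t j else 0)"
    and block: "\<forall>\<alpha><card (UNIV :: 'q set)^2. mmult \<chi> (A' \<alpha>) L = mmult \<chi> L (restrict_mat \<chi> (comp Ob (A_block W) \<alpha>))"
    and canonical: "\<forall>j<\<chi>. c' 0 j = 0" "\<forall>j<\<chi>. \<forall>k<\<chi>.
      (\<Sum>\<alpha><card (UNIV :: 'q set)^2. cnj (c' \<alpha> j) * c' \<alpha> k) + gram_sum \<chi> (card (UNIV :: 'q set)^2) A' j k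
        = (if j = k then 1 else 0)"
    by blast
  let ?WL = "\<lambda>a b. op_lincomb Ob (\<lambda>\<alpha>. gauged_comps Ob \<chi> W t L c' A' \<alpha> a b)"
  have "regular_form \<chi> ?WL" "left_canonical \<chi> ?WL"
    unfolding gauged_comps_def
    by (rule regular_form_lincomb_block[OF assms(1)], rule left_canonical_lincomb_block[OF assms(1) canonical])
  moreover have "L_block_form \<chi> \<chi> (gauge_mat \<chi> t L)"
    unfolding L_block_form_def gauge_mat_def by (auto simp: block_ut_def)
  moreover have "opmat_times_mat (\<chi>+2) ?WL (gauge_mat \<chi> t L) a b = mat_times_opmat (\<chi>+2) (gauge_mat \<chi> t L) W a b"
    if "a < \<chi>+2" "b < \<chi>+2" for a b
    using gauged_comps_intertwine[OF assms(1) rf _ _ _ that] row block by (intro intertwine_lincomb[OF assms(1)]) blast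
  ultimately show ?thesis
    by blast
qed

end
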